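(* Let $k\ge 4$ and let $f,\tilde f$ be CNF formulas whose literal-clause graphs with negation connections $\mathrm{LCN}(f)$ and $\mathrm{LCN}(\tilde f)$ are indistinguishable by the $k$-WL test. Then for every partial assignment $\sigma$ of the variables of $f$ that sets at most $\lfloor k/2\rfloor-1$ variables, there exists a partial assignment $\tilde\sigma$ of the variables of $\tilde f$ such that $\mathrm{LCN}(\sigma(f))$ and $\mathrm{LCN}(\tilde\sigma(\tilde f))$ are indistinguishable by the (1-dimensional) WL test.
   Context: Literals, clauses (sets of literals, read as disjunctions) and CNF formulas (sets of clauses, read as conjunctions) are as usual. For a CNF formula $f$ on variables $x_1,\dots,x_n$, $\mathrm{LCN}(f)$ is the edge-colored graph whose vertices are the $2n$ literals $x_i,\neg x_i$ and one vertex per clause, with a "literal-clause" colored edge $\{\ell,c\}$ whenever $\ell\in c$ and a differently colored "literal-literal" edge $\{x_i,\neg x_i\}$ for each $i$; vertices carry no labels. For a partial assignment $\sigma$, $\mathrm{LCN}(\sigma(f))$ is $\mathrm{LCN}(f)$ in which each literal vertex set to true by $\sigma$ receives the vertex label $\top$, each literal set to false receives the label $\bot$, and all other vertices carry a common default label. WL test (with vertex and edge colors): $\chi^0$ is the vertex labeling; $\chi^\ell(v)=(\chi^{\ell-1}(v),(\{\!\{\chi^{\ell-1}(w):w\in N_c(v)\}\!\})_{c})$, where $N_c(v)$ is the set of neighbors of $v$ via edges of color $c$, iterated until the partition stabilizes; it is run on the disjoint union of two graphs, and they are distinguished iff some color occurs a different number of times among the vertices of the two graphs. $k$-WL test: the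 atomic type of $\bar v\in V(G)^k$ is determined by the colored induced subgraph on its entries (tuples have equal type iff $v_i\mapsto u_i$ is an isomorphism of the colored induced subgraphs); $\chi^0(\bar v)$ is the atomic type and $\chi^\ell(\bar v)=(\chi^{\ell-1}(\bar v),\chi^{\ell-1}_1(\bar v),\dots,\chi^{\ell-1}_k(\bar v))$ with $\chi^{\ell-1}_i(\bar v)=\{\!\{\chi^{\ell-1}(v_1,..,v_{i-1},u,v_{i+1},..,v_k):u\in V\}\!\}$, until stable; run on the disjoint union, two graphs are distinguished iff some color class has different numbers of tuples from the two graphs. *)

theory Defs
  imports Main "HOL-Library.Multiset"
begin

record ('v, 'l, 'c) cgraph =
  verts :: "'v set"
  lab   :: "'v \<Rightarrow> 'l"
  edge  :: "'v \<Rightarrow> 'v \<Rightarrow> 'c option"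

definition disj_union ::
  "('v, 'l, 'c) cgraph \<Rightarrow> ('w, 'l, 'c) cgraph \<Rightarrow> ('v + 'w, 'l, 'c) cgraph" where
  "disj_union G H =
     \<lparr> verts = Inl ` verts G \<union> Inr ` verts H,
       lab = case_sum (lab G) (lab H),
       edge = (\<lambda>x y. case (x, y) of
                 (Inl u, Inl v) \<Rightarrow> edge G u v
               | (Inr u, Inr v) \<Rightarrow> edge H u v
               | _ \<Rightarrow> None) \<rparr>"

datatype ('l, 'c) wlcol =
  WBase 'l
| WStep "('l, 'c) wlcol" "'c \<Rightarrow> ('l, 'c) wlcol multiset"

fun wl_col :: "('v, 'l, 'c) cgraph \<Rightarrow> nat \<Rightarrow> 'v \<Rightarrow> ('l, 'c) wlcol" where
  "wl_col G 0 v = WBase (lab G v)"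
| "wl_col G (Suc n) v =
     WStep (wl_col G n v)
       (\<lambda>c. image_mset (wl_col G n) (mset_set {w \<in> verts G. edge G v w = Some c}))"

definition wl_part :: "('v, 'l, 'c) cgraph \<Rightarrow> nat \<Rightarrow> ('v \<times> 'v) set" where
  "wl_part G n = {(u, v). u \<in> verts G \<and> v \<in> verts G \<and> wl_col G n u = wl_col G n v}"

definition wl_stable_round :: "('v, 'l, 'c) cgraph \<Rightarrow> nat" where
  "wl_stable_round G = (LEAST n. wl_part G (Suc n) = wl_part G n)"

definition wl_distinguishes :: "('v, 'l, 'c) cgraph \<Rightarrow> ('w, 'l, 'c) cgraph \<Rightarrow> bool" where
  "wl_distinguishes G H =
     (let U = disj_union G H; m = wl_stable_round U in
      \<exists>c. card {v \<in> verts G. wl_col U m (Inl v) = c} \<noteq> card {v \<in> verts H. wl_col U m (Inr v) = c})"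

text \<open>Two tuples have
  the same atomic type iff \<open>v_i \<mapsto> u_i\<close> is an isomorphism of the coloured induced subgraphs.\<close>

definition atp :: "('v, 'l, 'c) cgraph \<Rightarrow> 'v list \<Rightarrow> 'l list \<times> (bool \<times> 'c option) list list" where
  "atp G vs = (map (lab G) vs, map (\<lambda>a. map (\<lambda>b. (a = b, edge G a b)) vs) vs)"

datatype ('l, 'c) kcol =
  KBase "'l list \<times> (bool \<times> 'c option) list list"
| KStep "('l, 'c) kcol" "('l, 'c) kcol multiset list"

fun kwl_col :: "nat \<Rightarrow> ('v, 'l, 'c) cgraph \<Rightarrow> nat \<Rightarrow> 'v list \<Rightarrow> ('l, 'c) kcol" where
  "kwl_col k G 0 vs = KBase (atp G vs)"
| "kwl_col k G (Suc n) vs =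
     KStep (kwl_col k G n vs)
       (map (\<lambda>i. image_mset (\<lambda>u. kwl_col k G n (vs[i := u])) (mset_set (verts G))) [0..<k])"

definition ktuples :: "nat \<Rightarrow> 'v set \<Rightarrow> 'v list set" where
  "ktuples k V = {vs. length vs = k \<and> set vs \<subseteq> V}"

definition kwl_part :: "nat \<Rightarrow> ('v, 'l, 'c) cgraph \<Rightarrow> nat \<Rightarrow> ('v list \<times> 'v list) set" where
  "kwl_part k G n = {(us, vs). us \<in> ktuples k (verts G) \<and> vs \<in> ktuples k (verts G)
                               \<and> kwl_col k G n us = kwl_col k G n vs}"

definition kwl_stable_round :: "nat \<Rightarrow> ('v, 'l, 'c) cgraph \<Rightarrow> nat" where
  "kwl_stable_round k G = (LEAST n. kwl_part k G (Suc n) = kwl_part k G n)"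

definition kwl_distinguishes :: "nat \<Rightarrow> ('v, 'l, 'c) cgraph \<Rightarrow> ('w, 'l, 'c) cgraph \<Rightarrow> bool" where
  "kwl_distinguishes k G H =
     (let U = disj_union G H; m = kwl_stable_round k U in
      \<exists>c. card {vs \<in> ktuples k (verts G). kwl_col k U m (map Inl vs) = c}
          \<noteq> card {vs \<in> ktuples k (verts H). kwl_col k U m (map Inr vs) = c})"

text \<open>Variables are \<open>0..<nvars\<close>; a literal \<open>(i, True)\<close> is \<open>x_i\<close>, \<open>(i, False)\<close> is \<open>\<not>x_i\<close>.\<close>

type_synonym lit = "nat \<times> bool"

record cnf =
  nvars :: nat
  clauses :: "lit set set"

definition wf_cnf :: "cnf \<Rightarrow> bool" where
  "wf_cnf f \<longleftrightarrow> finite (clauses f) \<and>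
     (\<forall>c \<in> clauses f. \<forall>(i, p) \<in> c. i < nvars f)"

datatype ecol = LitClause | LitLit

text \<open>Vertex labels: \<open>Some True\<close> = \<top>, \<open>Some False\<close> = \<bottom>, \<open>None\<close> = default label.
  A partial assignment is a map from variables to truth values.\<close>

definition LCN_assign :: "cnf \<Rightarrow> (nat \<rightharpoonup> bool) \<Rightarrow> (lit + lit set, bool option, ecol) cgraph" where
  "LCN_assign f \<sigma> =
     \<lparr> verts = Inl ` {(i, p). i < nvars f} \<union> Inr ` clauses f,
       lab = (\<lambda>x. case x of
                Inl (i, p) \<Rightarrow> (case \<sigma> i of None \<Rightarrow> None | Some b \<Rightarrow> Some (b = p))
              | Inr _ \<Rightarrow> None),
       edge = (\<lambda>x y. case (x, y) of
                 (Inl l, Inr c) \<Rightarrow> (if l \<in> c then Some LitClause else None)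
               | (Inr c, Inl l) \<Rightarrow> (if l \<in> c then Some LitClause else None)
               | (Inl (i, p), Inl (j, q)) \<Rightarrow> (if i = j \<and> p \<noteq> q then Some LitLit else None)
               | _ \<Rightarrow> None) \<rparr>"

definition LCN :: "cnf \<Rightarrow> (lit + lit set, bool option, ecol) cgraph" where
  "LCN f = LCN_assign f Map.empty"

end

theory Submission
  imports Defs
begin

(* We run colour refinement on configurations of k pebbles that may also be lifted off the
   board; its colours are determined by those of k-WL. On the disjoint union of LCN(f) and
   LCN(g) the colour of a configuration is determined by the unordered pair of colours of its
   two halves, and, since k-WL finds the same multiset of colours in both graphs, the colour of a
   configuration lying in one graph determines its colour computed inside that graph alone.

   Now pebble the 2m literals of the m variables set by sigma, the true literal first, and pad to
   a k-tuple; k-WL indistinguishability yields a k-tuple of LCN(g) of the same colour. Its first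
   2m entries have the same atomic type, so by the negation edges they are again m complementary
   pairs of literals, which define tau. In either graph the label of a vertex under the assignment
   is read off its atomic type relative to the 2m pebbled literals, and one round of colour
   refinement is simulated by the two remaining pebbles (2m + 2 <= k is the hypothesis on sigma):
   one steps to a neighbour and the other catches up. *)

lemma image_mset_eq_if_factor_through:
  assumes eq: "image_mset r A = image_mset r B"
    and cross: "\<And>x y. x \<in># A \<Longrightarrow> y \<in># B \<Longrightarrow> r x = r y \<Longrightarrow> f x = g y"
    and left: "\<And>x y. x \<in># A \<Longrightarrow> y \<in># A \<Longrightarrow> r x = r y \<Longrightarrow> f x = f y"
    and right: "\<And>x y. x \<in># B \<Longrightarrow> y \<in># B \<Longrightarrow> r x = r y \<Longrightarrow> g x = g y"
  shows "image_mset f A = image_mset g B"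
proof -
  define F where "F x = (if x \<in># A then f x else g x)" for x
  have F_A: "F x = f x" if "x \<in># A" for x
    using that by (simp add: F_def)
  have F_B: "F y = g y" if "y \<in># B" for y
    using that cross[OF _ that] by (simp add: F_def)
  have fibre: "F x = F y" if "x \<in># A + B" "y \<in># A + B" "r x = r y" for x y
    using that F_A F_B cross left right by (metis union_iff)
  define h where "h z = F (SOME x. x \<in># A + B \<and> r x = z)" for z
  have F_h: "F x = h (r x)" if x: "x \<in># A + B" for x
  proof -
    have "\<exists>y. y \<in># A + B \<and> r y = r x" using x by blast
    then have "(SOME y. y \<in># A + B \<and> r y = r x) \<in># A + B \<and> r (SOME y. y \<in># A + B \<and> r y = r x) = r x"
      by (rule someI_ex)
    then show ?thesis unfolding h_def using fibre x by metis
  qed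
  have "image_mset f A = image_mset (\<lambda>x. h (r x)) A"
    by (rule image_mset_cong) (metis F_A F_h union_iff)
  also have "\<dots> = image_mset h (image_mset r B)"
    by (simp flip: eq add: multiset.map_comp comp_def)
  also have "\<dots> = image_mset g B"
    by (simp add: multiset.map_comp comp_def) (rule image_mset_cong, metis F_B F_h union_iff)
  finally show ?thesis .
qed

lemma image_mset_eq_if_determined:
  assumes "image_mset r A = image_mset r B"
    and "\<And>x. x \<in># A \<Longrightarrow> x \<in> T" and "\<And>y. y \<in># B \<Longrightarrow> y \<in> T"
    and "\<And>x y. x \<in> T \<Longrightarrow> y \<in> T \<Longrightarrow> r x = r y \<Longrightarrow> f x = f y"
  shows "image_mset f A = image_mset f B"
  by (rule image_mset_eq_if_factor_through[where r = r]) (use assms in blast)+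

lemma count_image_mset_set:
  "finite A \<Longrightarrow> count (image_mset f (mset_set A)) c = card {x \<in> A. f x = c}"
  by (simp add: count_image_mset' eq_commute)

lemma mset_doubleton_eqD:
  "{#a, b#} = {#a', b'#} \<Longrightarrow> (a = a' \<and> b = b') \<or> (a = b' \<and> b = a')"
  by (metis add_mset_eq_single add_mset_remove_trivial diff_union_swap)

lemma in_mset_setD: "x \<in># mset_set A \<Longrightarrow> x \<in> A"
  by (cases "finite A") auto

lemma mset_set_insert_None:
  "finite S \<Longrightarrow> mset_set (insert None (Some ` S)) = add_mset None (image_mset Some (mset_set S))"
  by (simp add: image_mset_mset_set inj_on_def)

section \<open>Colour refinement on partial tuples\<close>

text \<open>A configuration is a list of pebble positions, \<open>None\<close> meaning that the pebble is off
  the board. Unlike in k-WL a pebble may be lifted; the pebbles may only be placed on the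
  vertices in \<open>S\<close>.\<close>

type_synonym ('l, 'c) patp = "(nat \<Rightarrow> 'l option) \<times> (nat \<Rightarrow> nat \<Rightarrow> bool \<times> 'c option)"

definition pebble :: "'v option list \<Rightarrow> nat \<Rightarrow> 'v option" where
  "pebble zs a = (if a < length zs then zs ! a else None)"

definition edge_opt :: "('v, 'l, 'c) cgraph \<Rightarrow> 'v option \<Rightarrow> 'v option \<Rightarrow> 'c option" where
  "edge_opt G x y = (case (x, y) of (Some a, Some b) \<Rightarrow> edge G a b | _ \<Rightarrow> None)"

definition patp :: "('v, 'l, 'c) cgraph \<Rightarrow> 'v option list \<Rightarrow> ('l, 'c) patp" where
  "patp G zs = (\<lambda>a. map_option (lab G) (pebble zs a),
                \<lambda>a b. (pebble zs a = pebble zs b, edge_opt G (pebble zs a) (pebble zs b)))"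

datatype ('l, 'c) pcol =
  PBase "('l, 'c) patp"
| PStep "('l, 'c) pcol" "('l, 'c) pcol multiset list"

fun pwl_col :: "('v, 'l, 'c) cgraph \<Rightarrow> 'v set \<Rightarrow> nat \<Rightarrow> 'v option list \<Rightarrow> ('l, 'c) pcol" where
  "pwl_col G S 0 zs = PBase (patp G zs)"
| "pwl_col G S (Suc n) zs = PStep (pwl_col G S n zs)
     (map (\<lambda>i. image_mset (\<lambda>u. pwl_col G S n (zs[i := u])) (mset_set (insert None (Some ` S))))
       [0..<length zs])"

fun pcol_base :: "('l, 'c) pcol \<Rightarrow> ('l, 'c) patp" where
  "pcol_base (PBase a) = a"
| "pcol_base (PStep c _) = pcol_base c"

fun pcol_prev :: "('l, 'c) pcol \<Rightarrow> ('l, 'c) pcol" where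
  "pcol_prev (PStep c _) = c"
| "pcol_prev c = c"

fun pcol_moves :: "('l, 'c) pcol \<Rightarrow> nat \<Rightarrow> ('l, 'c) pcol multiset" where
  "pcol_moves (PStep _ ms) i = ms ! i"
| "pcol_moves _ i = {#}"

lemma pcol_base_pwl_col [simp]: "pcol_base (pwl_col G S n zs) = patp G zs"
  by (induction n) auto

lemma pcol_moves_pwl_col:
  "i < length zs \<Longrightarrow> pcol_moves (pwl_col G S (Suc n) zs) i =
     image_mset (\<lambda>u. pwl_col G S n (zs[i := u])) (mset_set (insert None (Some ` S)))"
  by simp

lemma pcol_moves_pwl_col_split:
  assumes "finite S" and "i < length zs"
  shows "pcol_moves (pwl_col G S (Suc n) zs) i =
     add_mset (pwl_col G S n (zs[i := None]))
       (image_mset (\<lambda>x. pwl_col G S n (zs[i := Some x])) (mset_set S))"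
  unfolding pcol_moves_pwl_col[OF assms(2)] mset_set_insert_None[OF assms(1)]
  by (simp add: multiset.map_comp comp_def)

lemma pebble_update: "i < length zs \<Longrightarrow> pebble (zs[i := u]) j = (if j = i then u else pebble zs j)"
  by (simp add: pebble_def)

definition mset_pick :: "('a \<Rightarrow> bool) \<Rightarrow> 'a multiset \<Rightarrow> 'a" where
  "mset_pick P M = (SOME x. x \<in># M \<and> P x)"

lemma mset_pick_eq:
  assumes "x \<in># M" and "P x" and "\<And>y. y \<in># M \<Longrightarrow> P y \<Longrightarrow> y = x"
  shows "mset_pick P M = x"
  unfolding mset_pick_def by (rule some_equality) (use assms in blast)+

definition lifted_move :: "nat \<Rightarrow> ('l, 'c) pcol \<Rightarrow> ('l, 'c) pcol" where
  "lifted_move i c = mset_pick (\<lambda>c'. fst (pcol_base c') i = None) (pcol_moves c i)"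

lemma lifted_move_pwl_col:
  assumes "finite S" and "i < length zs"
  shows "lifted_move i (pwl_col G S (Suc n) zs) = pwl_col G S n (zs[i := None])"
  unfolding lifted_move_def pcol_moves_pwl_col_split[OF assms]
  by (rule mset_pick_eq) (use assms in \<open>auto simp: patp_def pebble_update\<close>)

lemma pwl_col_Suc_eqD:
  assumes eq: "pwl_col G S (Suc n) zs = pwl_col G S (Suc n) zs'"
    and fin: "finite S" and i: "i < length zs"
  shows "pwl_col G S n (zs[i := None]) = pwl_col G S n (zs'[i := None])"
    and "image_mset (\<lambda>x. pwl_col G S n (zs[i := Some x])) (mset_set S) =
         image_mset (\<lambda>x. pwl_col G S n (zs'[i := Some x])) (mset_set S)"
proof -
  have "length zs' = length zs"
    using arg_cong[OF eq, of "\<lambda>c. length (case c of PStep _ ms \<Rightarrow> ms)"] by simp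
  with i have i': "i < length zs'" by simp
  show lifted: "pwl_col G S n (zs[i := None]) = pwl_col G S n (zs'[i := None])"
    using arg_cong[OF eq, of "lifted_move i"]
    by (simp only: lifted_move_pwl_col[OF fin i] lifted_move_pwl_col[OF fin i'])
  show "image_mset (\<lambda>x. pwl_col G S n (zs[i := Some x])) (mset_set S) =
        image_mset (\<lambda>x. pwl_col G S n (zs'[i := Some x])) (mset_set S)"
    using arg_cong[OF eq, of "\<lambda>c. pcol_moves c i"]
    by (simp only: pcol_moves_pwl_col_split[OF fin i] pcol_moves_pwl_col_split[OF fin i'] lifted
        add_mset_add_mset_same_iff)
qed

definition unpebble :: "nat set \<Rightarrow> 'v option list \<Rightarrow> 'v option list" where
  "unpebble I zs = map (\<lambda>j. if j \<in> I then None else zs ! j) [0..<length zs]"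

lemma length_unpebble [simp]: "length (unpebble I zs) = length zs"
  by (simp add: unpebble_def)

lemma unpebble_empty [simp]: "unpebble {} zs = zs"
  by (auto simp: unpebble_def intro!: nth_equalityI)

lemma unpebble_update: "i < length zs \<Longrightarrow> (unpebble I zs)[i := u] = unpebble (I - {i}) (zs[i := u])"
  by (auto simp: unpebble_def nth_list_update intro!: nth_equalityI)

lemma unpebble_update_None: "i < length zs \<Longrightarrow> (unpebble I zs)[i := None] = unpebble (insert i I) zs"
  by (auto simp: unpebble_def nth_list_update intro!: nth_equalityI)

lemma pebble_unpebble: "pebble (unpebble I zs) a = (if a \<in> I then None else pebble zs a)"
  by (simp add: pebble_def unpebble_def)

definition patp_unpebble :: "nat set \<Rightarrow> ('l, 'c) patp \<Rightarrow> ('l, 'c) patp" where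
  "patp_unpebble I a =
     (\<lambda>x. if x \<in> I then None else fst a x,
      \<lambda>x y. if x \<in> I \<or> y \<in> I then ((x \<in> I \<or> fst a x = None) \<and> (y \<in> I \<or> fst a y = None), None)
            else snd a x y)"

fun pcol_unpebble :: "nat set \<Rightarrow> nat \<Rightarrow> ('l, 'c) pcol \<Rightarrow> ('l, 'c) pcol" where
  "pcol_unpebble I 0 c = (case c of PBase a \<Rightarrow> PBase (patp_unpebble I a) | _ \<Rightarrow> undefined)"
| "pcol_unpebble I (Suc n) c = (case c of
      PStep c0 ms \<Rightarrow> PStep (pcol_unpebble I n c0)
        (map (\<lambda>i. image_mset (pcol_unpebble (I - {i}) n) (ms ! i)) [0..<length ms])
    | _ \<Rightarrow> undefined)"

lemma patp_unpebble: "patp G (unpebble I zs) = patp_unpebble I (patp G zs)"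
  unfolding patp_def patp_unpebble_def
  by (auto simp: pebble_unpebble edge_opt_def fun_eq_iff split: option.splits)

lemma pwl_col_unpebble: "pwl_col G S n (unpebble I zs) = pcol_unpebble I n (pwl_col G S n zs)"
  by (induction n arbitrary: I zs)
     (auto simp: patp_unpebble unpebble_update multiset.map_comp comp_def intro!: image_mset_cong)

definition patp_of_atp :: "nat set \<Rightarrow> 'l list \<times> (bool \<times> 'c option) list list \<Rightarrow> ('l, 'c) patp" where
  "patp_of_atp I a =
     (\<lambda>x. if x < length (fst a) \<and> x \<notin> I then Some (fst a ! x) else None,
      \<lambda>x y. if (x < length (fst a) \<and> x \<notin> I) \<and> (y < length (fst a) \<and> y \<notin> I) then snd a ! x ! y
            else (\<not> (x < length (fst a) \<and> x \<notin> I) \<and> \<not> (y < length (fst a) \<and> y \<notin> I), None))"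

text \<open>Moving pebble \<open>i\<close> in a partial tuple either lifts it, or moves the corresponding entry
  of the underlying k-tuple; hence the extra element added to each move multiset.\<close>

fun pcol_of_kcol :: "nat \<Rightarrow> nat set \<Rightarrow> nat \<Rightarrow> ('l, 'c) kcol \<Rightarrow> ('l, 'c) pcol" where
  "pcol_of_kcol k I 0 c = (case c of KBase a \<Rightarrow> PBase (patp_of_atp I a) | _ \<Rightarrow> undefined)"
| "pcol_of_kcol k I (Suc n) c = (case c of
      KStep c0 ms \<Rightarrow> PStep (pcol_of_kcol k I n c0)
        (map (\<lambda>i. add_mset (pcol_of_kcol k (insert i I) n c0)
                     (image_mset (pcol_of_kcol k (I - {i}) n) (ms ! i))) [0..<k])
    | _ \<Rightarrow> undefined)"

lemma patp_unpebble_map_Some: "patp G (unpebble I (map Some zs)) = patp_of_atp I (atp G zs)"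
  unfolding patp_def patp_of_atp_def atp_def
  by (auto simp: pebble_def unpebble_def edge_opt_def fun_eq_iff)

lemma ktuples_update: "zs \<in> ktuples k V \<Longrightarrow> u \<in> V \<Longrightarrow> zs[i := u] \<in> ktuples k V"
  unfolding ktuples_def using set_update_subset_insert[of zs i u] by auto

lemma pwl_col_unpebble_map_Some:
  assumes fin: "finite (verts G)"
  shows "zs \<in> ktuples k (verts G) \<Longrightarrow>
    pwl_col G (verts G) n (unpebble I (map Some zs)) = pcol_of_kcol k I n (kwl_col k G n zs)"
proof (induction n arbitrary: I zs)
  case 0
  then show ?case by (simp add: patp_unpebble_map_Some)
next
  case (Suc n)
  then have len: "length zs = k" by (simp add: ktuples_def)
  have move: "(unpebble I (map Some zs))[i := Some v] = unpebble (I - {i}) (map Some (zs[i := v]))"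
    if "i < k" for i v
    using that len by (simp add: unpebble_update map_update)
  have "image_mset (\<lambda>u. pwl_col G (verts G) n ((unpebble I (map Some zs))[i := u]))
          (mset_set (insert None (Some ` verts G)))
     = add_mset (pcol_of_kcol k (insert i I) n (kwl_col k G n zs))
        (image_mset (pcol_of_kcol k (I - {i}) n)
          (image_mset (\<lambda>u. kwl_col k G n (zs[i := u])) (mset_set (verts G))))" if i: "i < k" for i
  proof -
    have "pwl_col G (verts G) n (unpebble J (map Some (zs[i := v]))) =
      pcol_of_kcol k J n (kwl_col k G n (zs[i := v]))" if "v \<in> verts G" for v J
      using Suc.IH ktuples_update[OF Suc.prems that] by blast
    then show ?thesis
      unfolding mset_set_insert_None[OF fin]
      using i len
      by (simp add: unpebble_update_None move multiset.map_comp comp_def Suc.IH[OF Suc.prems])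
         (intro image_mset_cong, simp add: fin)
  qed
  then show ?case
    using Suc len by simp
qed

lemma pwl_col_eq_if_kwl_col_eq:
  assumes "finite (verts G)" and "zs \<in> ktuples k (verts G)" and "zs' \<in> ktuples k (verts G)"
    and "kwl_col k G n zs = kwl_col k G n zs'"
  shows "pwl_col G (verts G) n (unpebble I (map Some zs)) =
         pwl_col G (verts G) n (unpebble I (map Some zs'))"
  using assms by (simp add: pwl_col_unpebble_map_Some)

lemma finite_ktuples: "finite A \<Longrightarrow> finite (ktuples k A)"
  unfolding ktuples_def using finite_lists_length_eq[of A k] by (simp add: conj_commute)

lemma kwl_part_Suc_subset: "kwl_part k G (Suc n) \<subseteq> kwl_part k G n"
  unfolding kwl_part_def by auto

lemma finite_kwl_part: "finite (verts G) \<Longrightarrow> finite (kwl_part k G n)"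
  by (rule finite_subset[where B = "ktuples k (verts G) \<times> ktuples k (verts G)"])
     (auto simp: kwl_part_def finite_ktuples)

lemma kwl_col_Suc_moves_eq:
  assumes "kwl_col k G (Suc n) zs = kwl_col k G (Suc n) zs'" and "i < k"
  shows "image_mset (\<lambda>u. kwl_col k G n (zs[i := u])) (mset_set (verts G)) =
         image_mset (\<lambda>u. kwl_col k G n (zs'[i := u])) (mset_set (verts G))"
  using assms(1) nth_map_upt[of i 0 k] assms(2)
  by (auto dest!: arg_cong[where f = "\<lambda>ms. ms ! i"])

lemma kwl_col_Suc_Suc_eq_if_stable:
  assumes stable: "kwl_part k G (Suc n) = kwl_part k G n"
    and zs: "zs \<in> ktuples k (verts G)" and zs': "zs' \<in> ktuples k (verts G)"
    and eq: "kwl_col k G (Suc n) zs = kwl_col k G (Suc n) zs'"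
  shows "kwl_col k G (Suc (Suc n)) zs = kwl_col k G (Suc (Suc n)) zs'"
proof -
  have "image_mset (\<lambda>u. kwl_col k G (Suc n) (zs[i := u])) (mset_set (verts G)) =
        image_mset (\<lambda>u. kwl_col k G (Suc n) (zs'[i := u])) (mset_set (verts G))" if i: "i < k" for i
  proof -
    have "image_mset (kwl_col k G (Suc n)) (image_mset (\<lambda>u. zs[i := u]) (mset_set (verts G))) =
          image_mset (kwl_col k G (Suc n)) (image_mset (\<lambda>u. zs'[i := u]) (mset_set (verts G)))"
    proof (rule image_mset_eq_if_determined[where T = "ktuples k (verts G)" and r = "kwl_col k G n"])
      show "image_mset (kwl_col k G n) (image_mset (\<lambda>u. zs[i := u]) (mset_set (verts G))) =
            image_mset (kwl_col k G n) (image_mset (\<lambda>u. zs'[i := u]) (mset_set (verts G)))"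
        using kwl_col_Suc_moves_eq[OF eq i] by (simp add: multiset.map_comp comp_def)
      show "kwl_col k G (Suc n) x = kwl_col k G (Suc n) y"
        if "x \<in> ktuples k (verts G)" "y \<in> ktuples k (verts G)" "kwl_col k G n x = kwl_col k G n y" for x y
        using that stable unfolding kwl_part_def by blast
    qed (use zs zs' in \<open>auto intro: ktuples_update dest: in_mset_setD\<close>)
    then show ?thesis by (simp add: multiset.map_comp comp_def)
  qed
  then show ?thesis
    using eq by (auto simp del: kwl_col.simps(2) simp: kwl_col.simps(2)[of k G "Suc n"])
qed

lemma kwl_part_stable_Suc:
  assumes "kwl_part k G (Suc n) = kwl_part k G n"
  shows "kwl_part k G (Suc (Suc n)) = kwl_part k G (Suc n)"
  using kwl_part_Suc_subset kwl_col_Suc_Suc_eq_if_stable[OF assms]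
  by (fastforce simp: kwl_part_def)

lemma kwl_part_eq_if_stable:
  assumes "kwl_part k G (Suc m) = kwl_part k G m" and "m \<le> n"
  shows "kwl_part k G n = kwl_part k G m"
proof -
  have "kwl_part k G (Suc n) = kwl_part k G n \<and> kwl_part k G n = kwl_part k G m"
    using assms(2)
  proof (induction n rule: dec_induct)
    case base
    then show ?case using assms(1) by simp
  next
    case (step n)
    then show ?case using kwl_part_stable_Suc by metis
  qed
  then show ?thesis ..
qed

lemma kwl_part_stabilises:
  assumes "finite (verts G)"
  shows "\<exists>n. kwl_part k G (Suc n) = kwl_part k G n"
proof (rule ccontr)
  assume "\<nexists>n. kwl_part k G (Suc n) = kwl_part k G n"
  then have less: "card (kwl_part k G (Suc n)) < card (kwl_part k G n)" for n
    using kwl_part_Suc_subset finite_kwl_part[OF assms] by (metis psubsetI psubset_card_mono)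
  have "card (kwl_part k G n) + n \<le> card (kwl_part k G 0)" for n
  proof (induction n)
    case (Suc n)
    then show ?case using less[of n] by linarith
  qed simp
  from this[of "Suc (card (kwl_part k G 0))"] show False by simp
qed

lemma kwl_col_eq_if_stable_eq:
  assumes fin: "finite (verts G)"
    and zs: "zs \<in> ktuples k (verts G)" and zs': "zs' \<in> ktuples k (verts G)"
    and eq: "kwl_col k G (kwl_stable_round k G) zs = kwl_col k G (kwl_stable_round k G) zs'"
  shows "kwl_col k G n zs = kwl_col k G n zs'"
proof -
  let ?m = "kwl_stable_round k G"
  have stable: "kwl_part k G (Suc ?m) = kwl_part k G ?m"
    unfolding kwl_stable_round_def by (rule LeastI_ex[OF kwl_part_stabilises[OF fin]])
  have "kwl_part k G ?m \<subseteq> kwl_part k G n"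
  proof (cases "n \<le> ?m")
    case True
    then show ?thesis by (rule lift_Suc_antimono_le[of "kwl_part k G", OF kwl_part_Suc_subset])
  next
    case False
    then have "kwl_part k G n = kwl_part k G ?m" by (intro kwl_part_eq_if_stable[OF stable]) simp
    then show ?thesis by simp
  qed
  moreover have "(zs, zs') \<in> kwl_part k G ?m"
    using zs zs' eq by (simp add: kwl_part_def)
  ultimately show ?thesis by (auto simp: kwl_part_def)
qed

section \<open>Pebble colours on a disjoint union\<close>

definition keep_Inl :: "('a + 'b) option \<Rightarrow> ('a + 'b) option" where
  "keep_Inl x = (case x of Some (Inl a) \<Rightarrow> Some (Inl a) | _ \<Rightarrow> None)"

definition keep_Inr :: "('a + 'b) option \<Rightarrow> ('a + 'b) option" where
  "keep_Inr x = (case x of Some (Inr b) \<Rightarrow> Some (Inr b) | _ \<Rightarrow> None)"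

lemma pebble_map_keep_Inl: "pebble (map keep_Inl zs) p = keep_Inl (pebble zs p)"
  by (simp add: pebble_def keep_Inl_def)

lemma pebble_map_keep_Inr: "pebble (map keep_Inr zs) p = keep_Inr (pebble zs p)"
  by (simp add: pebble_def keep_Inr_def)

text \<open>A move of pebble \<open>i\<close> in the union places it on at most one side and lifts it on the
  other, so the moves of a configuration split into the moves of its two halves.\<close>

definition split_moves ::
  "nat \<Rightarrow> ('l, 'c) pcol \<Rightarrow> ('l, 'c) pcol \<Rightarrow> ('l, 'c) pcol multiset multiset" where
  "split_moves i a b = (let a0 = lifted_move i a; b0 = lifted_move i b in
     add_mset {#a0, b0#} (image_mset (\<lambda>a'. {#a', b0#}) (pcol_moves a i - {#a0#}) +
                          image_mset (\<lambda>b'. {#a0, b'#}) (pcol_moves b i - {#b0#})))"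

lemma split_moves_commute: "split_moves i a b = split_moves i b a"
  unfolding split_moves_def Let_def by (simp add: add_mset_commute union_commute)

definition patp_merge :: "('l, 'c) patp \<Rightarrow> ('l, 'c) patp \<Rightarrow> ('l, 'c) patp" where
  "patp_merge a b =
     (\<lambda>p. if fst a p \<noteq> None then fst a p else fst b p,
      \<lambda>p q. if fst a p \<noteq> None \<and> fst a q \<noteq> None then snd a p q
            else if fst b p \<noteq> None \<and> fst b q \<noteq> None then snd b p q
            else (fst a p = None \<and> fst b p = None \<and> fst a q = None \<and> fst b q = None, None))"

lemma patp_merge_commute:
  "(\<And>p. fst a p = None \<or> fst b p = None) \<Longrightarrow> patp_merge a b = patp_merge b a"
  unfolding patp_merge_def by (auto simp: fun_eq_iff) (metis option.distinct(1))+

locale graph_pair =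
  fixes Gf :: "('a, 'l, 'c) cgraph" and Gg :: "('b, 'l, 'c) cgraph"
  assumes finite_Gf: "finite (verts Gf)" and finite_Gg: "finite (verts Gg)"
begin

definition "U = disj_union Gf Gg"
definition "SL = Inl ` verts Gf"
definition "SR = Inr ` verts Gg"

lemma verts_U: "verts U = SL \<union> SR"
  by (simp add: U_def SL_def SR_def disj_union_def)

lemma finite_SL: "finite SL" and finite_SR: "finite SR" and finite_verts_U: "finite (verts U)"
  using finite_Gf finite_Gg by (simp_all add: SL_def SR_def verts_U)

lemma mset_set_SL: "mset_set SL = image_mset Inl (mset_set (verts Gf))"
  and mset_set_SR: "mset_set SR = image_mset Inr (mset_set (verts Gg))"
  by (simp_all add: SL_def SR_def image_mset_mset_set)

lemma SL_SR_disjoint: "SL \<inter> SR = {}"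
  by (auto simp: SL_def SR_def)

lemma mset_set_verts_U: "mset_set (verts U) = mset_set SL + mset_set SR"
  by (simp add: verts_U mset_set_Union[OF finite_SL finite_SR SL_SR_disjoint])

lemma edge_U_Inl_Inr [simp]: "edge U (Inl a) (Inr b) = None"
  and edge_U_Inr_Inl [simp]: "edge U (Inr b) (Inl a) = None"
  by (simp_all add: U_def disj_union_def)

lemma atp_U_map_Inl: "atp U (map Inl ws) = atp Gf ws"
  and atp_U_map_Inr: "atp U (map Inr vs) = atp Gg vs"
  by (simp_all add: atp_def U_def disj_union_def comp_def)

text \<open>Unordered, so that a configuration on the left side and one on the right side can have
  the same split colour.\<close>

definition split_col :: "nat \<Rightarrow> ('a + 'b) option list \<Rightarrow> ('l, 'c) pcol multiset" where
  "split_col n zs = {#pwl_col U SL n (map keep_Inl zs), pwl_col U SR n (map keep_Inr zs)#}"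

lemma split_col_moves:
  assumes i: "i < length zs"
  shows "image_mset (\<lambda>u. split_col n (zs[i := u])) (mset_set (insert None (Some ` verts U))) =
    split_moves i (pwl_col U SL (Suc n) (map keep_Inl zs)) (pwl_col U SR (Suc n) (map keep_Inr zs))"
proof -
  let ?a0 = "pwl_col U SL n ((map keep_Inl zs)[i := None])"
  let ?b0 = "pwl_col U SR n ((map keep_Inr zs)[i := None])"
  have left: "split_col n (zs[i := Some x]) = {#pwl_col U SL n ((map keep_Inl zs)[i := Some x]), ?b0#}"
    if "x \<in> SL" for x
    using that by (auto simp: split_col_def SL_def keep_Inl_def keep_Inr_def map_update)
  have right: "split_col n (zs[i := Some x]) = {#?a0, pwl_col U SR n ((map keep_Inr zs)[i := Some x])#}"
    if "x \<in> SR" for x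
    using that by (auto simp: split_col_def SR_def keep_Inl_def keep_Inr_def map_update)
  have lifted: "split_col n (zs[i := None]) = {#?a0, ?b0#}"
    by (simp add: split_col_def keep_Inl_def keep_Inr_def map_update)
  have a0: "lifted_move i (pwl_col U SL (Suc n) (map keep_Inl zs)) = ?a0"
    using i by (simp add: lifted_move_pwl_col finite_SL del: pwl_col.simps)
  have b0: "lifted_move i (pwl_col U SR (Suc n) (map keep_Inr zs)) = ?b0"
    using i by (simp add: lifted_move_pwl_col finite_SR del: pwl_col.simps)
  have am: "pcol_moves (pwl_col U SL (Suc n) (map keep_Inl zs)) i - {#?a0#} =
      image_mset (\<lambda>x. pwl_col U SL n ((map keep_Inl zs)[i := Some x])) (mset_set SL)"
    using i by (simp add: pcol_moves_pwl_col_split finite_SL del: pwl_col.simps)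
  have bm: "pcol_moves (pwl_col U SR (Suc n) (map keep_Inr zs)) i - {#?b0#} =
      image_mset (\<lambda>x. pwl_col U SR n ((map keep_Inr zs)[i := Some x])) (mset_set SR)"
    using i by (simp add: pcol_moves_pwl_col_split finite_SR del: pwl_col.simps)
  have "image_mset (\<lambda>x. split_col n (zs[i := Some x])) (mset_set SL) =
        image_mset (\<lambda>a'. {#a', ?b0#})
          (image_mset (\<lambda>x. pwl_col U SL n ((map keep_Inl zs)[i := Some x])) (mset_set SL))"
    unfolding multiset.map_comp comp_def by (intro image_mset_cong) (simp add: left finite_SL)
  moreover have "image_mset (\<lambda>x. split_col n (zs[i := Some x])) (mset_set SR) =
        image_mset (\<lambda>b'. {#?a0, b'#})
          (image_mset (\<lambda>x. pwl_col U SR n ((map keep_Inr zs)[i := Some x])) (mset_set SR))"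
    unfolding multiset.map_comp comp_def by (intro image_mset_cong) (simp add: right finite_SR)
  ultimately show ?thesis
    unfolding split_moves_def Let_def a0 b0 am bm mset_set_insert_None[OF finite_verts_U]
      mset_set_verts_U
    by (simp add: lifted multiset.map_comp comp_def)
qed

lemma patp_U_split: "patp U zs = patp_merge (patp U (map keep_Inl zs)) (patp U (map keep_Inr zs))"
proof -
  have "fst (patp U zs) p = fst (patp_merge (patp U (map keep_Inl zs)) (patp U (map keep_Inr zs))) p"
    for p
    by (cases "pebble zs p")
       (auto simp: patp_merge_def patp_def pebble_map_keep_Inl pebble_map_keep_Inr
        keep_Inl_def keep_Inr_def split: sum.splits)
  moreover have "snd (patp U zs) p q =
      snd (patp_merge (patp U (map keep_Inl zs)) (patp U (map keep_Inr zs))) p q" for p q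
    by (cases "pebble zs p"; cases "pebble zs q")
       (auto simp: patp_merge_def patp_def pebble_map_keep_Inl pebble_map_keep_Inr edge_opt_def
        keep_Inl_def keep_Inr_def split: sum.splits)
  ultimately show ?thesis by (simp add: prod_eq_iff fun_eq_iff)
qed

lemma patp_eq_if_split_col_0_eq:
  assumes "split_col 0 zs = split_col 0 zs'"
  shows "patp U zs = patp U zs'"
proof -
  have disjoint: "fst (patp U (map keep_Inl ws)) p = None \<or> fst (patp U (map keep_Inr ws)) p = None"
    for ws p
    by (cases "pebble ws p")
       (auto simp: patp_def pebble_map_keep_Inl pebble_map_keep_Inr keep_Inl_def keep_Inr_def
        split: sum.splits)
  from assms consider
      "patp U (map keep_Inl zs) = patp U (map keep_Inl zs')"
      "patp U (map keep_Inr zs) = patp U (map keep_Inr zs')"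
    | "patp U (map keep_Inl zs) = patp U (map keep_Inr zs')"
      "patp U (map keep_Inr zs) = patp U (map keep_Inl zs')"
    by (auto simp: split_col_def dest: mset_doubleton_eqD)
  then show ?thesis
    by cases (simp_all add: patp_U_split[of zs] patp_U_split[of zs'] patp_merge_commute[OF disjoint])
qed

lemma split_col_Suc_moves_eq:
  assumes eq: "split_col (Suc n) zs = split_col (Suc n) zs'"
    and i: "i < length zs" and len: "length zs = length zs'"
  shows "image_mset (\<lambda>u. split_col n (zs[i := u])) (mset_set (insert None (Some ` verts U))) =
         image_mset (\<lambda>u. split_col n (zs'[i := u])) (mset_set (insert None (Some ` verts U)))"
proof -
  have "split_moves i (pwl_col U SL (Suc n) (map keep_Inl zs)) (pwl_col U SR (Suc n) (map keep_Inr zs)) =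
        split_moves i (pwl_col U SL (Suc n) (map keep_Inl zs')) (pwl_col U SR (Suc n) (map keep_Inr zs'))"
    using mset_doubleton_eqD[OF eq[unfolded split_col_def]]
  proof
    assume "pwl_col U SL (Suc n) (map keep_Inl zs) = pwl_col U SR (Suc n) (map keep_Inr zs') \<and>
            pwl_col U SR (Suc n) (map keep_Inr zs) = pwl_col U SL (Suc n) (map keep_Inl zs')"
    then show ?thesis by (simp only: split_moves_commute[of i "pwl_col U SL (Suc n) (map keep_Inl zs')"])
  qed (simp only:)
  then show ?thesis
    using i len by (simp add: split_col_moves del: pwl_col.simps)
qed

lemma pwl_col_eq_if_split_col_eq:
  "length zs = length zs' \<Longrightarrow> split_col n zs = split_col n zs' \<Longrightarrow>
   pwl_col U (verts U) n zs = pwl_col U (verts U) n zs'"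
proof (induction n arbitrary: zs zs')
  case 0
  then show ?case by (metis pwl_col.simps(1) patp_eq_if_split_col_0_eq)
next
  case (Suc n)
  let ?M = "mset_set (insert None (Some ` verts U))"
  have "split_col n zs = split_col n zs'"
    using arg_cong[OF Suc.prems(2), of "image_mset pcol_prev"] by (simp add: split_col_def)
  then have prev: "pwl_col U (verts U) n zs = pwl_col U (verts U) n zs'"
    using Suc.IH Suc.prems(1) by blast
  have "image_mset (pwl_col U (verts U) n) (image_mset (\<lambda>u. zs[i := u]) ?M) =
        image_mset (pwl_col U (verts U) n) (image_mset (\<lambda>u. zs'[i := u]) ?M)" if i: "i < length zs" for i
  proof -
    have "image_mset (split_col n) (image_mset (\<lambda>u. zs[i := u]) ?M) =
          image_mset (split_col n) (image_mset (\<lambda>u. zs'[i := u]) ?M)"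
      using split_col_Suc_moves_eq[OF Suc.prems(2) i Suc.prems(1)] by (simp add: multiset.map_comp comp_def)
    then show ?thesis
    proof (rule image_mset_eq_if_determined[where T = "{ws. length ws = length zs}"])
      show "pwl_col U (verts U) n ws = pwl_col U (verts U) n ws'"
        if "ws \<in> {ws. length ws = length zs}" "ws' \<in> {ws. length ws = length zs}"
          and "split_col n ws = split_col n ws'" for ws ws'
        using that Suc.IH by simp
    qed (use Suc.prems(1) in auto)
  qed
  then show ?case
    using prev Suc.prems(1) by (simp add: multiset.map_comp comp_def)
qed

end

definition pcol_diagonal :: "nat \<Rightarrow> ('l, 'c) pcol \<Rightarrow> bool" where
  "pcol_diagonal k c \<longleftrightarrow> (\<forall>j<k. fst (snd (pcol_base c) 0 j))"

lemma unpebble_replicate_Some: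
  "i < k \<Longrightarrow> unpebble (- {i}) (replicate k (Some x)) = (replicate k None)[i := Some x]"
  by (auto simp: unpebble_def nth_list_update intro!: nth_equalityI)

lemma single_pebble_cols_from_ktuples:
  assumes S: "finite S" and k: "0 < k" and i: "i < k"
  shows "image_mset (\<lambda>x. pwl_col G S n ((replicate k None)[i := Some x])) (mset_set S) =
    image_mset (pcol_unpebble (- {i}) n) (filter_mset (pcol_diagonal k)
      (image_mset (\<lambda>vs. pwl_col G S n (map Some vs)) (mset_set (ktuples k S))))"
proof -
  let ?F = "\<lambda>vs. pwl_col G S n (map Some vs)"
  have diagonal: "{vs \<in> ktuples k S. pcol_diagonal k (?F vs)} = (\<lambda>x. replicate k x) ` S"
  proof (intro set_eqI iffI)
    fix vs assume vs: "vs \<in> {vs \<in> ktuples k S. pcol_diagonal k (?F vs)}"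
    then have len: "length vs = k" and sub: "set vs \<subseteq> S" by (auto simp: ktuples_def)
    have "vs ! j = vs ! 0" if j: "j < k" for j
    proof -
      have "fst (snd (patp G (map Some vs)) 0 j)" using vs j by (simp add: pcol_diagonal_def)
      then show ?thesis using j len k by (simp add: patp_def pebble_def)
    qed
    then have "vs = replicate k (vs ! 0)" using len by (auto intro!: nth_equalityI)
    moreover have "vs ! 0 \<in> S" using sub len k by auto
    ultimately show "vs \<in> (\<lambda>x. replicate k x) ` S" by blast
  next
    fix vs assume "vs \<in> (\<lambda>x. replicate k x) ` S"
    then show "vs \<in> {vs \<in> ktuples k S. pcol_diagonal k (?F vs)}"
      using k by (auto simp: ktuples_def pcol_diagonal_def patp_def pebble_def)
  qed
  have "inj_on (\<lambda>x. replicate k x) S" using k by (auto simp: inj_on_def)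
  then have "filter_mset (pcol_diagonal k) (image_mset ?F (mset_set (ktuples k S))) =
      image_mset (\<lambda>x. ?F (replicate k x)) (mset_set S)"
    by (simp add: filter_mset_image_mset finite_ktuples[OF S] diagonal image_mset_mset_set[symmetric]
        multiset.map_comp comp_def)
  then show ?thesis
    using i by (simp add: multiset.map_comp comp_def flip: pwl_col_unpebble unpebble_replicate_Some)
qed

lemma ktuples_image:
  assumes "inj f"
  shows "ktuples k (f ` A) = map f ` ktuples k A"
proof
  show "ktuples k (f ` A) \<subseteq> map f ` ktuples k A"
  proof
    fix vs assume vs: "vs \<in> ktuples k (f ` A)"
    then have "\<forall>y\<in>set vs. f (inv f y) = y" by (auto simp: ktuples_def f_inv_into_f)
    then have "vs = map f (map (inv f) vs)" by (simp add: map_idI)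
    moreover have "map (inv f) vs \<in> ktuples k A" using vs assms by (auto simp: ktuples_def)
    ultimately show "vs \<in> map f ` ktuples k A" by blast
  qed
qed (fastforce simp: ktuples_def)

locale kwl_pair = graph_pair Gf Gg
  for Gf :: "('a, 'l, 'c) cgraph" and Gg :: "('b, 'l, 'c) cgraph" +
  fixes k :: nat
  assumes k_pos: "0 < k"
begin

definition side :: "bool \<Rightarrow> ('a + 'b) set" where
  "side s = (if s then SL else SR)"

lemma finite_side: "finite (side s)"
  by (simp add: side_def finite_SL finite_SR)

lemma mset_set_verts_U_side: "mset_set (verts U) = mset_set (side s) + mset_set (side (\<not> s))"
  by (cases s) (simp_all add: side_def mset_set_verts_U union_commute)

definition on_side :: "bool \<Rightarrow> ('a + 'b) option list \<Rightarrow> bool" where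
  "on_side s ws \<longleftrightarrow> length ws = k \<and> set ws \<subseteq> insert None (Some ` side s)"

lemma on_side_update: "on_side s ws \<Longrightarrow> u \<in> insert None (Some ` side s) \<Longrightarrow> on_side s (ws[i := u])"
  unfolding on_side_def using set_update_subset_insert by fastforce

lemma on_side_map_Some: "vs \<in> ktuples k (side s) \<Longrightarrow> on_side s (map Some vs)"
  by (auto simp: on_side_def ktuples_def)

lemma map_keep_on_side:
  assumes "on_side s ws"
  shows "map keep_Inl ws = (if s then ws else replicate k None)"
    and "map keep_Inr ws = (if s then replicate k None else ws)"
proof -
  have keep: "keep_Inl x = (if s then x else None)" "keep_Inr x = (if s then None else x)"
    if "x \<in> set ws" for x
  proof -
    have "x \<in> insert None (Some ` side s)" using assms that by (auto simp: on_side_def)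
    then show "keep_Inl x = (if s then x else None)" "keep_Inr x = (if s then None else x)"
      by (cases s; auto simp: side_def SL_def SR_def keep_Inl_def keep_Inr_def)+
  qed
  with assms show "map keep_Inl ws = (if s then ws else replicate k None)"
    and "map keep_Inr ws = (if s then replicate k None else ws)"
    by (auto simp: on_side_def intro!: map_idI replicate_eqI)
qed

lemma split_col_on_side_across:
  assumes ws: "on_side s ws" and i: "i < k" and x: "x \<in> side (\<not> s)"
  shows "split_col n (ws[i := Some x]) =
    {#pwl_col U (side s) n (ws[i := None]), pwl_col U (side (\<not> s)) n ((replicate k None)[i := Some x])#}"
  using x map_keep_on_side[OF ws] by (cases s)
    (auto simp: split_col_def map_update side_def SL_def SR_def keep_Inl_def keep_Inr_def add_mset_commute)

text \<open>In the induction proving this invariant, a pebble moved to the other side meets an empty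
  configuration there; so the step needs the single-pebble colours of the two sides to agree,
  and these are read off the colours of diagonal k-tuples, where indistinguishability enters.\<close>

definition side_determined :: "nat \<Rightarrow> bool" where
  "side_determined n \<longleftrightarrow> (\<forall>s s' ws ws'. on_side s ws \<longrightarrow> on_side s' ws' \<longrightarrow>
     pwl_col U (verts U) n ws = pwl_col U (verts U) n ws' \<longrightarrow>
     pwl_col U (side s) n ws = pwl_col U (side s') n ws')"

definition single_pebble_cols :: "nat \<Rightarrow> bool \<Rightarrow> nat \<Rightarrow> ('l, 'c) pcol multiset" where
  "single_pebble_cols n s i =
     image_mset (\<lambda>x. pwl_col U (side s) n ((replicate k None)[i := Some x])) (mset_set (side s))"

definition single_pebble_cols_agree :: "nat \<Rightarrow> bool" where
  "single_pebble_cols_agree n \<longleftrightarrow> (\<forall>i<k. single_pebble_cols n True i = single_pebble_cols n False i)"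

lemma single_pebble_cols_agreeD:
  "single_pebble_cols_agree n \<Longrightarrow> i < k \<Longrightarrow> single_pebble_cols n s i = single_pebble_cols n s' i"
  unfolding single_pebble_cols_agree_def by (cases s; cases s') auto

definition ktuple_cols_agree :: "nat \<Rightarrow> bool" where
  "ktuple_cols_agree n \<longleftrightarrow>
     image_mset (\<lambda>vs. pwl_col U (verts U) n (map Some vs)) (mset_set (ktuples k SL)) =
     image_mset (\<lambda>vs. pwl_col U (verts U) n (map Some vs)) (mset_set (ktuples k SR))"

lemma moves_across_eq:
  assumes agree: "single_pebble_cols_agree n" and ws: "on_side s ws" and ws': "on_side s' ws'"
    and i: "i < k"
    and lifted: "pwl_col U (side s) n (ws[i := None]) = pwl_col U (side s') n (ws'[i := None])"
  shows "image_mset (\<lambda>x. pwl_col U (verts U) n (ws[i := Some x])) (mset_set (side (\<not> s))) =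
         image_mset (\<lambda>x. pwl_col U (verts U) n (ws'[i := Some x])) (mset_set (side (\<not> s')))"
proof -
  have split: "image_mset (split_col n) (image_mset (\<lambda>x. vs[i := Some x]) (mset_set (side (\<not> t)))) =
      image_mset (\<lambda>c. {#pwl_col U (side t) n (vs[i := None]), c#}) (single_pebble_cols n (\<not> t) i)"
    if "on_side t vs" for t vs
    unfolding single_pebble_cols_def multiset.map_comp comp_def
    by (intro image_mset_cong) (simp add: split_col_on_side_across[OF that i] finite_side)
  have "image_mset (pwl_col U (verts U) n) (image_mset (\<lambda>x. ws[i := Some x]) (mset_set (side (\<not> s)))) =
        image_mset (pwl_col U (verts U) n) (image_mset (\<lambda>x. ws'[i := Some x]) (mset_set (side (\<not> s'))))"
  proof (rule image_mset_eq_if_determined[where r = "split_col n" and T = "{vs. length vs = k}"])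
    show "image_mset (split_col n) (image_mset (\<lambda>x. ws[i := Some x]) (mset_set (side (\<not> s)))) =
          image_mset (split_col n) (image_mset (\<lambda>x. ws'[i := Some x]) (mset_set (side (\<not> s'))))"
      unfolding split[OF ws] split[OF ws'] lifted single_pebble_cols_agreeD[OF agree i, of "\<not> s" "\<not> s'"] ..
  qed (use ws ws' in \<open>auto simp: on_side_def intro: pwl_col_eq_if_split_col_eq\<close>)
  then show ?thesis by (simp add: multiset.map_comp comp_def)
qed


lemma side_cols_eq_if_cols_eq:
  assumes det: "side_determined n"
    and eq: "image_mset (pwl_col U (verts U) n) A = image_mset (pwl_col U (verts U) n) B"
    and A: "\<And>x. x \<in># A \<Longrightarrow> on_side s x" and B: "\<And>y. y \<in># B \<Longrightarrow> on_side s' y"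
  shows "image_mset (pwl_col U (side s) n) A = image_mset (pwl_col U (side s') n) B"
  by (rule image_mset_eq_if_factor_through[OF eq]) (use det A B in \<open>unfold side_determined_def, blast\<close>)+

lemma side_moves_eq:
  assumes det: "side_determined n" and agree: "single_pebble_cols_agree n"
    and ws: "on_side s ws" and ws': "on_side s' ws'" and i: "i < k"
    and eq: "pwl_col U (verts U) (Suc n) ws = pwl_col U (verts U) (Suc n) ws'"
  shows "image_mset (\<lambda>u. pwl_col U (side s) n (ws[i := u])) (mset_set (insert None (Some ` side s))) =
         image_mset (\<lambda>u. pwl_col U (side s') n (ws'[i := u])) (mset_set (insert None (Some ` side s')))"
proof -
  have i_ws: "i < length ws" using ws i by (simp add: on_side_def)
  have lifted: "pwl_col U (side s) n (ws[i := None]) = pwl_col U (side s') n (ws'[i := None])"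
    using det pwl_col_Suc_eqD(1)[OF eq finite_verts_U i_ws]
      on_side_update[OF ws, of None] on_side_update[OF ws', of None]
    unfolding side_determined_def by blast
  have split: "image_mset (\<lambda>x. pwl_col U (verts U) n (vs[i := Some x])) (mset_set (verts U)) =
      image_mset (\<lambda>x. pwl_col U (verts U) n (vs[i := Some x])) (mset_set (side t)) +
      image_mset (\<lambda>x. pwl_col U (verts U) n (vs[i := Some x])) (mset_set (side (\<not> t)))" for vs t
    by (simp add: mset_set_verts_U_side[of t])
  have "image_mset (\<lambda>x. pwl_col U (verts U) n (ws[i := Some x])) (mset_set (side s)) =
        image_mset (\<lambda>x. pwl_col U (verts U) n (ws'[i := Some x])) (mset_set (side s'))"
    using pwl_col_Suc_eqD(2)[OF eq finite_verts_U i_ws] moves_across_eq[OF agree ws ws' i lifted]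
    unfolding split[of ws s] split[of ws' s'] by simp
  then have "image_mset (pwl_col U (side s) n) (image_mset (\<lambda>x. ws[i := Some x]) (mset_set (side s))) =
             image_mset (pwl_col U (side s') n) (image_mset (\<lambda>x. ws'[i := Some x]) (mset_set (side s')))"
    by (intro side_cols_eq_if_cols_eq[OF det])
       (auto simp: finite_side multiset.map_comp comp_def intro: on_side_update ws ws')
  then show ?thesis
    unfolding mset_set_insert_None[OF finite_side]
    using lifted by (simp add: multiset.map_comp comp_def)
qed

lemma side_determined_Suc:
  assumes det: "side_determined n" and agree: "single_pebble_cols_agree n"
  shows "side_determined (Suc n)"
  unfolding side_determined_def
proof (intro allI impI)
  fix s s' ws ws'
  assume ws: "on_side s ws" and ws': "on_side s' ws'"
    and eq: "pwl_col U (verts U) (Suc n) ws = pwl_col U (verts U) (Suc n) ws'"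
  have "pwl_col U (verts U) n ws = pwl_col U (verts U) n ws'"
    using arg_cong[OF eq, of pcol_prev] by simp
  then have "pwl_col U (side s) n ws = pwl_col U (side s') n ws'"
    using det ws ws' unfolding side_determined_def by blast
  moreover have "length ws = k" "length ws' = k"
    using ws ws' by (simp_all add: on_side_def)
  ultimately show "pwl_col U (side s) (Suc n) ws = pwl_col U (side s') (Suc n) ws'"
    unfolding pwl_col.simps(2)[where n = n]
    using side_moves_eq[OF det agree ws ws' _ eq] by (simp cong: map_cong)
qed

lemma single_pebble_cols_agree_if:
  assumes agree: "ktuple_cols_agree n" and det: "side_determined n"
  shows "single_pebble_cols_agree n"
  unfolding single_pebble_cols_agree_def
proof (intro allI impI)
  fix i assume i: "i < k"
  let ?F = "\<lambda>s vs. pwl_col U (side s) n (map Some vs)"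
  have "image_mset (pwl_col U (side True) n) (image_mset (map Some) (mset_set (ktuples k SL))) =
        image_mset (pwl_col U (side False) n) (image_mset (map Some) (mset_set (ktuples k SR)))"
    using agree finite_ktuples[OF finite_SL] finite_ktuples[OF finite_SR]
    by (intro side_cols_eq_if_cols_eq[OF det])
       (auto simp: ktuple_cols_agree_def multiset.map_comp comp_def
        dest!: in_mset_setD intro!: on_side_map_Some[of _ True, simplified side_def, simplified]
        on_side_map_Some[of _ False, simplified side_def, simplified])
  then have "image_mset (?F True) (mset_set (ktuples k (side True))) =
             image_mset (?F False) (mset_set (ktuples k (side False)))"
    by (simp add: multiset.map_comp comp_def side_def)
  then show "single_pebble_cols n True i = single_pebble_cols n False i"
    unfolding single_pebble_cols_def
      single_pebble_cols_from_ktuples[OF finite_side[of True] k_pos i, where G = U and n = n]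
      single_pebble_cols_from_ktuples[OF finite_side[of False] k_pos i, where G = U and n = n]
    by simp
qed

lemma side_determined:
  assumes "\<And>n. ktuple_cols_agree n"
  shows "side_determined n"
proof (induction n)
  case 0
  then show ?case by (simp add: side_determined_def)
next
  case (Suc n)
  then show ?case using side_determined_Suc single_pebble_cols_agree_if assms by blast
qed


lemma ktuples_SL: "ktuples k SL = map Inl ` ktuples k (verts Gf)"
  and ktuples_SR: "ktuples k SR = map Inr ` ktuples k (verts Gg)"
  by (simp_all add: SL_def SR_def ktuples_image)

lemma mset_set_ktuples_SL:
    "mset_set (ktuples k SL) = image_mset (map Inl) (mset_set (ktuples k (verts Gf)))"
  and mset_set_ktuples_SR:
    "mset_set (ktuples k SR) = image_mset (map Inr) (mset_set (ktuples k (verts Gg)))"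
  unfolding ktuples_SL ktuples_SR by (simp_all add: image_mset_mset_set inj_on_def)

lemma map_Inl_in_ktuples_U: "xs \<in> ktuples k (verts Gf) \<Longrightarrow> map Inl xs \<in> ktuples k (verts U)"
  and map_Inr_in_ktuples_U: "ys \<in> ktuples k (verts Gg) \<Longrightarrow> map Inr ys \<in> ktuples k (verts U)"
  by (auto simp: ktuples_def verts_U SL_def SR_def)

lemma kwl_indist_card_eq:
  assumes "\<not> kwl_distinguishes k Gf Gg"
  shows "card {vs \<in> ktuples k (verts Gf). kwl_col k U (kwl_stable_round k U) (map Inl vs) = c} =
         card {vs \<in> ktuples k (verts Gg). kwl_col k U (kwl_stable_round k U) (map Inr vs) = c}"
  using assms by (simp add: kwl_distinguishes_def Let_def U_def)

lemma ktuple_cols_agree_if_kwl_indist: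
  assumes nd: "\<not> kwl_distinguishes k Gf Gg"
  shows "ktuple_cols_agree n"
proof -
  let ?m = "kwl_stable_round k U"
  have "image_mset (\<lambda>vs. kwl_col k U ?m (map Inl vs)) (mset_set (ktuples k (verts Gf))) =
        image_mset (\<lambda>vs. kwl_col k U ?m (map Inr vs)) (mset_set (ktuples k (verts Gg)))"
    by (intro multiset_eqI)
       (simp add: kwl_indist_card_eq[OF nd] count_image_mset_set finite_ktuples finite_Gf finite_Gg)
  then have "image_mset (kwl_col k U ?m) (mset_set (ktuples k SL)) =
             image_mset (kwl_col k U ?m) (mset_set (ktuples k SR))"
    by (simp add: mset_set_ktuples_SL mset_set_ktuples_SR multiset.map_comp comp_def)
  then show ?thesis
    unfolding ktuple_cols_agree_def
  proof (rule image_mset_eq_if_determined[where T = "ktuples k (verts U)"])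
    have "x \<in> ktuples k (verts U)" if "x \<in># mset_set (ktuples k S)" "S \<subseteq> verts U" for x S
      using that by (auto simp: ktuples_def dest: in_mset_setD)
    then show "x \<in># mset_set (ktuples k SL) \<Longrightarrow> x \<in> ktuples k (verts U)"
      and "x \<in># mset_set (ktuples k SR) \<Longrightarrow> x \<in> ktuples k (verts U)" for x
      by (auto simp: verts_U)
    show "pwl_col U (verts U) n (map Some x) = pwl_col U (verts U) n (map Some y)"
      if "x \<in> ktuples k (verts U)" "y \<in> ktuples k (verts U)" "kwl_col k U ?m x = kwl_col k U ?m y" for x y
      using pwl_col_eq_if_kwl_col_eq[OF finite_verts_U that(1,2)
          kwl_col_eq_if_stable_eq[OF finite_verts_U that], where I = "{}"]
      by simp
  qed
qed

definition same_kwl_col :: "'a list \<Rightarrow> 'b list \<Rightarrow> bool" where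
  "same_kwl_col xs ys \<longleftrightarrow>
     kwl_col k U (kwl_stable_round k U) (map Inl xs) = kwl_col k U (kwl_stable_round k U) (map Inr ys)"

lemma same_kwl_col_exists:
  assumes nd: "\<not> kwl_distinguishes k Gf Gg" and xs: "xs \<in> ktuples k (verts Gf)"
  obtains ys where "ys \<in> ktuples k (verts Gg)"
    and "same_kwl_col xs ys"
proof -
  let ?m = "kwl_stable_round k U"
  let ?c = "kwl_col k U ?m (map Inl xs)"
  have "card {vs \<in> ktuples k (verts Gf). kwl_col k U ?m (map Inl vs) = ?c} =
        card {vs \<in> ktuples k (verts Gg). kwl_col k U ?m (map Inr vs) = ?c}"
    by (rule kwl_indist_card_eq[OF nd])
  moreover have "card {vs \<in> ktuples k (verts Gf). kwl_col k U ?m (map Inl vs) = ?c} \<noteq> 0"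
    using xs finite_ktuples[OF finite_Gf] by (subst card_0_eq) auto
  ultimately have "{vs \<in> ktuples k (verts Gg). kwl_col k U ?m (map Inr vs) = ?c} \<noteq> {}"
    by force
  then show ?thesis using that by (auto simp: same_kwl_col_def)
qed

lemma on_side_unpebble: "on_side s zs \<Longrightarrow> on_side s (unpebble I zs)"
  using nth_mem by (fastforce simp: on_side_def unpebble_def)

lemma side_cols_eq_if_same_kwl_col:
  assumes nd: "\<not> kwl_distinguishes k Gf Gg"
    and xs: "xs \<in> ktuples k (verts Gf)" and ys: "ys \<in> ktuples k (verts Gg)"
    and eq: "same_kwl_col xs ys"
  shows "pwl_col U SL n (unpebble I (map Some (map Inl xs))) =
         pwl_col U SR n (unpebble I (map Some (map Inr ys)))"
proof -
  note xs_U = map_Inl_in_ktuples_U[OF xs] and ys_U = map_Inr_in_ktuples_U[OF ys]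
  have "pwl_col U (verts U) n (unpebble I (map Some (map Inl xs))) =
        pwl_col U (verts U) n (unpebble I (map Some (map Inr ys)))"
    by (rule pwl_col_eq_if_kwl_col_eq[OF finite_verts_U xs_U ys_U])
       (rule kwl_col_eq_if_stable_eq[OF finite_verts_U xs_U ys_U eq[unfolded same_kwl_col_def]])
  moreover have "map Inl xs \<in> ktuples k (side True)" and "map Inr ys \<in> ktuples k (side False)"
    using xs ys by (simp_all add: side_def ktuples_SL ktuples_SR)
  then have "on_side True (unpebble I (map Some (map Inl xs)))"
    and "on_side False (unpebble I (map Some (map Inr ys)))"
    by (simp_all only: on_side_unpebble on_side_map_Some)
  ultimately show ?thesis
    using side_determined[OF ktuple_cols_agree_if_kwl_indist[OF nd]]
    unfolding side_determined_def side_def by fastforce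
qed

lemma atp_eq_if_same_kwl_col:
  assumes xs: "xs \<in> ktuples k (verts Gf)" and ys: "ys \<in> ktuples k (verts Gg)"
    and eq: "same_kwl_col xs ys"
  shows "atp Gf xs = atp Gg ys"
  using kwl_col_eq_if_stable_eq[OF finite_verts_U map_Inl_in_ktuples_U[OF xs] map_Inr_in_ktuples_U[OF ys],
      of 0] eq
  by (simp add: same_kwl_col_def flip: atp_U_map_Inl atp_U_map_Inr)

end

section \<open>Simulating colour refinement by two pebbles\<close>

definition catch_up :: "nat \<Rightarrow> ('l, 'c) pcol \<Rightarrow> ('l, 'c) pcol" where
  "catch_up k c = mset_pick (\<lambda>c'. fst (snd (pcol_base c') (k - 2) (k - 1))) (pcol_moves c (k - 2))"

lemma catch_up_pwl_col:
  assumes k: "2 \<le> k" and t: "length t = k" and S: "finite S" "w \<in> S"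
  shows "catch_up k (pwl_col G S (Suc n) (t[k - 1 := Some w])) =
         pwl_col G S n (t[k - 2 := Some w, k - 1 := Some w])"
proof -
  have i: "k - 2 < length (t[k - 1 := Some w])" using k t by simp
  have joined: "fst (snd (patp G (t[k - 1 := Some w, k - 2 := u])) (k - 2) (k - 1)) \<longleftrightarrow> u = Some w" for u
    using k t by (simp add: patp_def pebble_def nth_list_update)
  have "t[k - 1 := Some w, k - 2 := Some w] = t[k - 2 := Some w, k - 1 := Some w]"
    by (rule list_update_swap) (use k in simp)
  moreover have "catch_up k (pwl_col G S (Suc n) (t[k - 1 := Some w])) =
      pwl_col G S n (t[k - 1 := Some w, k - 2 := Some w])"
    unfolding catch_up_def pcol_moves_pwl_col[OF i]
  proof (rule mset_pick_eq)
    show "pwl_col G S n (t[k - 1 := Some w, k - 2 := Some w]) \<in>#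
        image_mset (\<lambda>u. pwl_col G S n (t[k - 1 := Some w, k - 2 := u])) (mset_set (insert None (Some ` S)))"
      unfolding set_image_mset using S by (intro imageI) simp
    show "fst (snd (pcol_base (pwl_col G S n (t[k - 1 := Some w, k - 2 := Some w]))) (k - 2) (k - 1))"
      by (simp only: pcol_base_pwl_col joined)
  next
    fix c assume c: "c \<in># image_mset (\<lambda>u. pwl_col G S n (t[k - 1 := Some w, k - 2 := u]))
        (mset_set (insert None (Some ` S)))"
      and c_joined: "fst (snd (pcol_base c) (k - 2) (k - 1))"
    from c obtain u where u: "c = pwl_col G S n (t[k - 1 := Some w, k - 2 := u])"
      by (auto simp del: pwl_col.simps)
    then have "u = Some w" using c_joined joined[of u] by (simp only: pcol_base_pwl_col)
    then show "c = pwl_col G S n (t[k - 1 := Some w, k - 2 := Some w])"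
      using u by (simp only:)
  qed
  ultimately show ?thesis by simp
qed

lemma list_update_update_pair:
  "i \<noteq> j \<Longrightarrow> xs[i := a, j := b, i := c, j := d] = xs[i := c, j := d]"
  by (simp add: list_update_swap)

lemma catch_up_placed_moves:
  assumes k: "2 \<le> k" and t: "length t = k" and S: "finite S" and W: "W \<subseteq> S"
    and P: "\<And>u. u \<in> insert None (Some ` S) \<Longrightarrow> P (patp G (t[k - 1 := u])) \<longleftrightarrow> u \<in> Some ` W"
  shows "image_mset (catch_up k)
           (filter_mset (P \<circ> pcol_base) (pcol_moves (pwl_col G S (Suc (Suc n)) t) (k - 1))) =
         image_mset (\<lambda>w. pwl_col G S n (t[k - 2 := Some w, k - 1 := Some w])) (mset_set W)"
proof -
  have i: "k - 1 < length t" using k t by simp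
  have fin_W: "finite W" using S W finite_subset by blast
  have "{u \<in> insert None (Some ` S). P (patp G (t[k - 1 := u]))} = Some ` W"
    using P W by auto
  then have "filter_mset (P \<circ> pcol_base) (pcol_moves (pwl_col G S (Suc (Suc n)) t) (k - 1)) =
      image_mset (\<lambda>u. pwl_col G S (Suc n) (t[k - 1 := u])) (mset_set (Some ` W))"
    unfolding pcol_moves_pwl_col[OF i] filter_mset_image_mset comp_def pcol_base_pwl_col
      filter_mset_mset_set[OF finite_insert[THEN iffD2, OF finite_imageI[OF S]]]
    by (rule arg_cong)
  also have "\<dots> = image_mset (\<lambda>w. pwl_col G S (Suc n) (t[k - 1 := Some w])) (mset_set W)"
    by (simp add: image_mset_mset_set[symmetric] multiset.map_comp comp_def del: pwl_col.simps)
  finally have moves: "filter_mset (P \<circ> pcol_base) (pcol_moves (pwl_col G S (Suc (Suc n)) t) (k - 1)) =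
      image_mset (\<lambda>w. pwl_col G S (Suc n) (t[k - 1 := Some w])) (mset_set W)" .
  have "image_mset (catch_up k) (image_mset (\<lambda>w. pwl_col G S (Suc n) (t[k - 1 := Some w])) (mset_set W)) =
        image_mset (\<lambda>w. pwl_col G S n (t[k - 2 := Some w, k - 1 := Some w])) (mset_set W)"
    unfolding multiset.map_comp comp_def
  proof (intro image_mset_cong)
    fix w assume "w \<in># mset_set W"
    then have "w \<in> S" using W by (auto dest: in_mset_setD)
    then show "catch_up k (pwl_col G S (Suc n) (t[k - 1 := Some w])) =
        pwl_col G S n (t[k - 2 := Some w, k - 1 := Some w])"
      by (rule catch_up_pwl_col[OF k t S])
  qed
  then show ?thesis
    unfolding moves .
qed

locale pebble_relabelling = kwl_pair Gf Gg k
  for Gf :: "('a, 'l, 'c) cgraph" and Gg :: "('b, 'l, 'c) cgraph" and k +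
  fixes Gf' :: "('a, 'l2, 'c) cgraph" and Gg' :: "('b, 'l2, 'c) cgraph"
    and xh yh :: "('a + 'b) option list" and L :: "('l, 'c) patp \<Rightarrow> 'l2"
  assumes two_le_k: "2 \<le> k"
    and verts_Gf': "verts Gf' = verts Gf" and edge_Gf': "edge Gf' = edge Gf"
    and verts_Gg': "verts Gg' = verts Gg" and edge_Gg': "edge Gg' = edge Gg"
    and length_xh: "length xh = k" and length_yh: "length yh = k"
    and lab_Gf': "\<And>v. v \<in> verts Gf \<Longrightarrow>
      lab Gf' v = L (patp U (xh[k - 2 := Some (Inl v), k - 1 := Some (Inl v)]))"
    and lab_Gg': "\<And>v. v \<in> verts Gg \<Longrightarrow>
      lab Gg' v = L (patp U (yh[k - 2 := Some (Inr v), k - 1 := Some (Inr v)]))"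
    and pwl_col_xh_yh: "\<And>n. pwl_col U SL n xh = pwl_col U SR n yh"
begin

definition "U' = disj_union Gf' Gg'"

definition start :: "bool \<Rightarrow> ('a + 'b) option list" where
  "start s = (if s then xh else yh)"

text \<open>Two rounds of pebble refinement per round of colour refinement: pebble \<open>k - 1\<close> steps
  to a neighbour and pebble \<open>k - 2\<close> catches up.\<close>

definition pebbled_col :: "nat \<Rightarrow> 'a + 'b \<Rightarrow> ('l, 'c) pcol" where
  "pebbled_col n v = pwl_col U (side (isl v)) n ((start (isl v))[k - 2 := Some v, k - 1 := Some v])"

lemma length_start: "length (start s) = k"
  by (simp add: start_def length_xh length_yh)

lemma isl_eq_if_in_side: "v \<in> side s \<Longrightarrow> isl v = s"
  by (cases s) (auto simp: side_def SL_def SR_def)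

lemma lab_U': "v \<in> verts U \<Longrightarrow> lab U' v = L (patp U ((start (isl v))[k - 2 := Some v, k - 1 := Some v]))"
  by (auto simp: U'_def disj_union_def start_def verts_U SL_def SR_def lab_Gf' lab_Gg')

lemma neighbours_U':
  "v \<in> verts U \<Longrightarrow> {w \<in> verts U'. edge U' v w = Some e} = {w \<in> side (isl v). edge U v w = Some e}"
  by (auto simp: U'_def U_def disj_union_def verts_Gf' verts_Gg' edge_Gf' edge_Gg' side_def SL_def SR_def
      split: sum.splits)

lemma pebbled_col_neighbours:
  assumes v: "v \<in> verts U"
  shows "image_mset (catch_up k) (filter_mset ((\<lambda>a. snd (snd a (k - 2) (k - 1)) = Some e) \<circ> pcol_base)
           (pcol_moves (pebbled_col (Suc (Suc n)) v) (k - 1))) =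
         image_mset (pebbled_col n) (mset_set {w \<in> side (isl v). edge U v w = Some e})"
proof -
  let ?t = "(start (isl v))[k - 2 := Some v, k - 1 := Some v]"
  have "image_mset (catch_up k) (filter_mset ((\<lambda>a. snd (snd a (k - 2) (k - 1)) = Some e) \<circ> pcol_base)
           (pcol_moves (pebbled_col (Suc (Suc n)) v) (k - 1))) =
        image_mset (\<lambda>w. pwl_col U (side (isl v)) n (?t[k - 2 := Some w, k - 1 := Some w]))
          (mset_set {w \<in> side (isl v). edge U v w = Some e})"
    unfolding pebbled_col_def
    by (rule catch_up_placed_moves[OF two_le_k _ finite_side])
       (use two_le_k length_start in \<open>auto simp: patp_def pebble_def edge_opt_def nth_list_update
         split: option.splits\<close>)
  also have "\<dots> = image_mset (pebbled_col n) (mset_set {w \<in> side (isl v). edge U v w = Some e})"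
    using two_le_k by (intro image_mset_cong)
       (use finite_side in \<open>auto simp: pebbled_col_def isl_eq_if_in_side list_update_update_pair\<close>)
  finally show ?thesis .
qed

lemma wl_col_eq_if_pebbled_col_eq:
  "v \<in> verts U \<Longrightarrow> v' \<in> verts U \<Longrightarrow> pebbled_col (2 * n) v = pebbled_col (2 * n) v' \<Longrightarrow>
   wl_col U' n v = wl_col U' n v'"
proof (induction n arbitrary: v v')
  case 0
  then show ?case by (simp add: pebbled_col_def lab_U')
next
  case (Suc n)
  have eq: "pebbled_col (Suc (Suc (2 * n))) v = pebbled_col (Suc (Suc (2 * n))) v'"
    using Suc.prems by simp
  then have "pebbled_col (2 * n) v = pebbled_col (2 * n) v'"
    by (simp add: pebbled_col_def)
  then have prev: "wl_col U' n v = wl_col U' n v'"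
    by (rule Suc.IH[OF Suc.prems(1,2)])
  have neighbours: "image_mset (wl_col U' n) (mset_set {w \<in> verts U'. edge U' v w = Some e}) =
                    image_mset (wl_col U' n) (mset_set {w \<in> verts U'. edge U' v' w = Some e})" for e
  proof -
    have eq_neighbours:
      "image_mset (pebbled_col (2 * n)) (mset_set {w \<in> side (isl v). edge U v w = Some e}) =
          image_mset (pebbled_col (2 * n)) (mset_set {w \<in> side (isl v'). edge U v' w = Some e})"
      unfolding pebbled_col_neighbours[OF Suc.prems(1), symmetric]
        pebbled_col_neighbours[OF Suc.prems(2), symmetric] eq ..
    have mem: "x \<in> verts U" if "x \<in># mset_set {w \<in> side s. edge U u w = Some e}" for x s u
      using that by (cases s) (auto simp: verts_U side_def dest: in_mset_setD)
    show ?thesis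
      unfolding neighbours_U'[OF Suc.prems(1)] neighbours_U'[OF Suc.prems(2)]
      by (rule image_mset_eq_if_determined[OF eq_neighbours mem mem Suc.IH])
  qed
  show ?case
    using prev neighbours by (simp add: fun_eq_iff)
qed

lemma pebbled_cols_agree:
  "image_mset (pebbled_col n) (mset_set SL) = image_mset (pebbled_col n) (mset_set SR)"
proof -
  have via_moves: "image_mset (pebbled_col n) (mset_set (side s)) =
    image_mset (catch_up k) (filter_mset ((\<lambda>a. fst a (k - 1) \<noteq> None) \<circ> pcol_base)
      (pcol_moves (pwl_col U (side s) (Suc (Suc n)) (start s)) (k - 1)))" for s
  proof -
    have "image_mset (catch_up k) (filter_mset ((\<lambda>a. fst a (k - 1) \<noteq> None) \<circ> pcol_base)
        (pcol_moves (pwl_col U (side s) (Suc (Suc n)) (start s)) (k - 1))) =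
      image_mset (\<lambda>w. pwl_col U (side s) n ((start s)[k - 2 := Some w, k - 1 := Some w]))
        (mset_set (side s))"
      by (rule catch_up_placed_moves[OF two_le_k length_start finite_side])
         (use two_le_k length_start in \<open>auto simp: patp_def pebble_def\<close>)
    also have "\<dots> = image_mset (pebbled_col n) (mset_set (side s))"
      by (intro image_mset_cong) (use finite_side in \<open>auto simp: pebbled_col_def isl_eq_if_in_side\<close>)
    finally show ?thesis by (rule sym)
  qed
  have "pwl_col U (side True) (Suc (Suc n)) (start True) =
        pwl_col U (side False) (Suc (Suc n)) (start False)"
    using pwl_col_xh_yh by (simp add: side_def start_def del: pwl_col.simps)
  then have "image_mset (pebbled_col n) (mset_set (side True)) =
             image_mset (pebbled_col n) (mset_set (side False))"
    unfolding via_moves by (rule arg_cong)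
  then show ?thesis by (simp add: side_def)
qed

lemma wl_cols_agree: "image_mset (wl_col U' n) (mset_set SL) = image_mset (wl_col U' n) (mset_set SR)"
  by (rule image_mset_eq_if_determined[OF pebbled_cols_agree[of "2 * n"], where T = "verts U",
        OF _ _ wl_col_eq_if_pebbled_col_eq])
     (auto simp: verts_U dest: in_mset_setD)

theorem not_wl_distinguishes: "\<not> wl_distinguishes Gf' Gg'"
proof -
  have "card {v \<in> verts Gf'. wl_col U' n (Inl v) = c} = card {v \<in> verts Gg'. wl_col U' n (Inr v) = c}"
    for n c
  proof -
    have "count (image_mset (\<lambda>v. wl_col U' n (Inl v)) (mset_set (verts Gf))) c =
          count (image_mset (\<lambda>v. wl_col U' n (Inr v)) (mset_set (verts Gg))) c"
      using wl_cols_agree[of n] by (simp add: mset_set_SL mset_set_SR multiset.map_comp comp_def)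
    then show ?thesis
      by (simp only: count_image_mset_set finite_Gf finite_Gg verts_Gf' verts_Gg')
  qed
  then show ?thesis
    by (simp add: wl_distinguishes_def Let_def U'_def)
qed

end

definition patp_to_atp :: "nat list \<Rightarrow> ('l, 'c) patp \<Rightarrow> 'l list \<times> (bool \<times> 'c option) list list" where
  "patp_to_atp idx a = (map (\<lambda>i. the (fst a i)) idx, map (\<lambda>i. map (\<lambda>j. snd a i j) idx) idx)"

lemma patp_to_atp_patp:
  assumes "\<And>i. i \<in> set idx \<Longrightarrow> pebble zs i \<noteq> None"
  shows "patp_to_atp idx (patp G zs) = atp G (map (\<lambda>i. the (pebble zs i)) idx)"
  using assms by (force simp: patp_to_atp_def patp_def atp_def edge_opt_def split: option.splits)

lemma pebble_unpebble_map_Some: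
  "pebble (unpebble {j..<length ws} (map Some ws)) i =
     (if i < j \<and> i < length ws then Some (ws ! i) else None)"
  by (simp add: pebble_def unpebble_def)

lemma patp_to_atp_pebbled:
  assumes ws: "length ws = k" and j: "j + 2 \<le> k"
  shows "patp_to_atp ([0..<j] @ [k - 1])
      (patp G ((unpebble {j..<k} (map Some ws))[k - 2 := Some v, k - 1 := Some v])) =
    atp G (take j ws @ [v])"
proof -
  define zs where "zs = (unpebble {j..<k} (map Some ws))[k - 2 := Some v, k - 1 := Some v]"
  have low: "pebble zs i = Some (ws ! i)" if "i < j" for i
    using that j ws pebble_unpebble_map_Some[of j ws i] by (simp add: zs_def pebble_def nth_list_update)
  have last: "pebble zs (k - 1) = Some v"
    using j ws by (simp add: zs_def pebble_def)
  have "map (\<lambda>i. the (pebble zs i)) [0..<j] = take j ws"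
    using j ws by (auto intro!: nth_equalityI simp: low)
  then have "map (\<lambda>i. the (pebble zs i)) ([0..<j] @ [k - 1]) = take j ws @ [v]"
    by (simp only: map_append list.map last option.sel)
  moreover have "pebble zs i \<noteq> None" if "i \<in> set ([0..<j] @ [k - 1])" for i
    using that low last by (cases "i < j") auto
  ultimately show ?thesis
    using patp_to_atp_patp[of "[0..<j] @ [k - 1]" zs G] unfolding zs_def by simp
qed

context kwl_pair
begin

lemma kwl_indist_verts_empty:
  assumes nd: "\<not> kwl_distinguishes k Gf Gg" and empty: "verts Gf = {}"
  shows "verts Gg = {}"
proof (rule ccontr)
  assume "verts Gg \<noteq> {}"
  then obtain y where "y \<in> verts Gg" by blast
  then have "replicate k y \<in> ktuples k (verts Gg)" by (auto simp: ktuples_def)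
  then have "card {vs \<in> ktuples k (verts Gg).
      kwl_col k U (kwl_stable_round k U) (map Inr vs) =
      kwl_col k U (kwl_stable_round k U) (map Inr (replicate k y))} \<noteq> 0"
    using finite_ktuples[OF finite_Gg] by (subst card_0_eq) auto
  moreover have "ktuples k (verts Gf) = {}" using empty k_pos by (auto simp: ktuples_def)
  ultimately show False using kwl_indist_card_eq[OF nd] by simp
qed

theorem not_wl_distinguishes_relabel:
  fixes Gf' :: "('a, 'l2, 'c) cgraph" and Gg' :: "('b, 'l2, 'c) cgraph"
    and L :: "'l list \<times> (bool \<times> 'c option) list list \<Rightarrow> 'l2"
  assumes nd: "\<not> kwl_distinguishes k Gf Gg"
    and xs: "xs \<in> ktuples k (verts Gf)" and ys: "ys \<in> ktuples k (verts Gg)"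
    and eq: "same_kwl_col xs ys"
    and j: "j + 2 \<le> k"
    and Gf': "verts Gf' = verts Gf" "edge Gf' = edge Gf"
    and Gg': "verts Gg' = verts Gg" "edge Gg' = edge Gg"
    and lab_Gf': "\<And>v. v \<in> verts Gf \<Longrightarrow> lab Gf' v = L (atp Gf (take j xs @ [v]))"
    and lab_Gg': "\<And>v. v \<in> verts Gg \<Longrightarrow> lab Gg' v = L (atp Gg (take j ys @ [v]))"
  shows "\<not> wl_distinguishes Gf' Gg'"
proof -
  have len: "length xs = k" "length ys = k" using xs ys by (simp_all add: ktuples_def)
  define xh :: "('a + 'b) option list" where "xh = unpebble {j..<k} (map Some (map Inl xs))"
  define yh :: "('a + 'b) option list" where "yh = unpebble {j..<k} (map Some (map Inr ys))"
  let ?idx = "[0..<j] @ [k - 1]"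
  interpret pebble_relabelling Gf Gg k Gf' Gg' xh yh "L \<circ> patp_to_atp ?idx"
  proof unfold_locales
    show "pwl_col U SL n xh = pwl_col U SR n yh" for n
      unfolding xh_def yh_def by (rule side_cols_eq_if_same_kwl_col[OF nd xs ys eq])
    show "lab Gf' v = (L \<circ> patp_to_atp ?idx) (patp U (xh[k - 2 := Some (Inl v), k - 1 := Some (Inl v)]))"
      if "v \<in> verts Gf" for v
      using that patp_to_atp_pebbled[of "map Inl xs" k j U "Inl v"] len j
      by (simp add: lab_Gf' xh_def take_map flip: atp_U_map_Inl)
    show "lab Gg' v = (L \<circ> patp_to_atp ?idx) (patp U (yh[k - 2 := Some (Inr v), k - 1 := Some (Inr v)]))"
      if "v \<in> verts Gg" for v
      using that patp_to_atp_pebbled[of "map Inr ys" k j U "Inr v"] len j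
      by (simp add: lab_Gg' yh_def take_map flip: atp_U_map_Inr)
  qed (use j Gf' Gg' len in \<open>simp_all add: xh_def yh_def\<close>)
  show ?thesis by (rule not_wl_distinguishes)
qed

end

section \<open>Partial assignments as pebbled literals\<close>

lemma verts_LCN: "verts (LCN F) = Inl ` {(i, p). i < nvars F} \<union> Inr ` clauses F"
  and verts_LCN_assign: "verts (LCN_assign F \<rho>) = verts (LCN F)"
  and edge_LCN_assign: "edge (LCN_assign F \<rho>) = edge (LCN F)"
  by (simp_all add: LCN_def LCN_assign_def)

lemma lab_LCN_assign_Inl:
  "lab (LCN_assign F \<rho>) (Inl (i, p)) = (case \<rho> i of None \<Rightarrow> None | Some b \<Rightarrow> Some (b = p))"
  and lab_LCN_assign_Inr: "lab (LCN_assign F \<rho>) (Inr c) = None"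
  by (simp_all add: LCN_assign_def)

lemma edge_LCN_LitLit_iff:
  "edge (LCN F) x y = Some LitLit \<longleftrightarrow> (\<exists>i p. x = Inl (i, p) \<and> y = Inl (i, \<not> p))"
  by (auto simp: LCN_def LCN_assign_def split: sum.splits if_splits)

lemma finite_verts_LCN: "wf_cnf F \<Longrightarrow> finite (verts (LCN F))"
proof -
  have "{(i, p). i < nvars F} = {..<nvars F} \<times> (UNIV :: bool set)" by auto
  then show "wf_cnf F \<Longrightarrow> finite (verts (LCN F))" by (simp add: verts_LCN wf_cnf_def)
qed

text \<open>For each variable set by \<open>\<rho>\<close>, the list holds the literal made true followed by the one made
  false, so the label of a literal is the parity of its position.\<close>

definition assignment_pebbling :: "(nat \<rightharpoonup> bool) \<Rightarrow> (lit + lit set) list \<Rightarrow> bool" where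
  "assignment_pebbling \<rho> zl \<longleftrightarrow> even (length zl) \<and>
     (\<forall>t < length zl div 2. \<exists>i p.
        zl ! (2 * t) = Inl (i, p) \<and> zl ! (2 * t + 1) = Inl (i, \<not> p) \<and> \<rho> i = Some p) \<and>
     (\<forall>i b. \<rho> i = Some b \<longrightarrow> Inl (i, b) \<in> set zl)"

lemma nth_concat_pairs:
  "t < length vs \<Longrightarrow> concat (map (\<lambda>i. [a i, b i]) vs) ! (2 * t) = a (vs ! t) \<and>
                      concat (map (\<lambda>i. [a i, b i]) vs) ! (2 * t + 1) = b (vs ! t)"
proof (induction vs arbitrary: t)
  case (Cons v vs)
  then show ?case by (cases t) auto
qed simp

lemma length_concat_pairs: "length (concat (map (\<lambda>i. [a i, b i]) vs)) = 2 * length vs"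
  by (induction vs) auto

lemma assignment_pebbling_exists:
  assumes "dom \<rho> \<subseteq> {..<nvars F}"
  obtains zl where "assignment_pebbling \<rho> zl" and "length zl = 2 * card (dom \<rho>)"
    and "set zl \<subseteq> verts (LCN F)"
proof
  have fin: "finite (dom \<rho>)" using assms finite_subset by blast
  define vars where "vars = sorted_list_of_set (dom \<rho>)"
  define zl :: "(lit + lit set) list"
    where "zl = concat (map (\<lambda>i. [Inl (i, the (\<rho> i)), Inl (i, \<not> the (\<rho> i))]) vars)"
  have set_vars: "set vars = dom \<rho>" and len_vars: "length vars = card (dom \<rho>)"
    using fin by (simp_all add: vars_def)
  have nth_zl: "zl ! (2 * t) = Inl (vars ! t, the (\<rho> (vars ! t))) \<and>
      zl ! (2 * t + 1) = Inl (vars ! t, \<not> the (\<rho> (vars ! t)))" if "t < length vars" for t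
    using nth_concat_pairs[OF that] unfolding zl_def .
  show len: "length zl = 2 * card (dom \<rho>)"
    by (simp add: zl_def length_concat_pairs len_vars)
  have set_zl: "set zl = (\<Union>i\<in>dom \<rho>. {Inl (i, the (\<rho> i)), Inl (i, \<not> the (\<rho> i))})"
    by (auto simp: zl_def set_vars)
  show "set zl \<subseteq> verts (LCN F)"
    using assms by (auto simp: set_zl verts_LCN)
  show "assignment_pebbling \<rho> zl"
    unfolding assignment_pebbling_def
    using len nth_zl set_vars len_vars nth_mem[of _ vars] by (auto simp: set_zl domIff)
qed

lemma assignment_pebbled_ktuple:
  assumes dom: "dom \<rho> \<subseteq> {..<nvars F}" and k: "2 * card (dom \<rho>) \<le> k" and ne: "verts (LCN F) \<noteq> {}"
  obtains xs where "xs \<in> ktuples k (verts (LCN F))" and "assignment_pebbling \<rho> (take (2 * card (dom \<rho>)) xs)"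
proof -
  obtain zl where zl: "assignment_pebbling \<rho> zl" "length zl = 2 * card (dom \<rho>)" "set zl \<subseteq> verts (LCN F)"
    using assignment_pebbling_exists[OF dom] by blast
  obtain v where "v \<in> verts (LCN F)" using ne by blast
  then have "zl @ replicate (k - length zl) v \<in> ktuples k (verts (LCN F))"
    using zl(2,3) k by (auto simp: ktuples_def)
  moreover have "take (2 * card (dom \<rho>)) (zl @ replicate (k - length zl) v) = zl"
    using zl(2) by simp
  ultimately show ?thesis using that zl(1) by metis
qed

lemma assignment_pebbling_pair:
  assumes "assignment_pebbling \<rho> zl" and "j < length zl"
  shows "\<exists>i p. zl ! (2 * (j div 2)) = Inl (i, p) \<and> zl ! (2 * (j div 2) + 1) = Inl (i, \<not> p) \<and>
    \<rho> i = Some p \<and> 2 * (j div 2) + 1 < length zl"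
proof -
  have "even (length zl)" and "j div 2 < length zl div 2"
    using assms by (auto simp: assignment_pebbling_def elim!: evenE)
  moreover from this have "2 * (j div 2) + 1 < length zl" by presburger
  ultimately show ?thesis using assms(1) by (auto simp: assignment_pebbling_def)
qed

lemma lab_LCN_assign_pebbled:
  assumes "assignment_pebbling \<rho> zl" and j: "j < length zl"
  shows "lab (LCN_assign F \<rho>) (zl ! j) = Some (even j)"
  using assignment_pebbling_pair[OF assms]
  by (cases "even j") (auto simp: lab_LCN_assign_Inl elim!: evenE oddE)

lemma lab_LCN_assign_unpebbled:
  assumes pebbling: "assignment_pebbling \<rho> zl" and x: "x \<notin> set zl"
  shows "lab (LCN_assign F \<rho>) x = None"
proof (cases x)
  case (Inl l)
  obtain i q where l: "l = (i, q)" by (cases l)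
  show ?thesis
  proof (cases "\<rho> i")
    case (Some b)
    then have "Inl (i, b) \<in> set zl" using pebbling by (auto simp: assignment_pebbling_def)
    then obtain j where j: "j < length zl" "zl ! j = Inl (i, b)" by (auto simp: in_set_conv_nth)
    obtain i' p where pair: "zl ! (2 * (j div 2)) = Inl (i', p)" "zl ! (2 * (j div 2) + 1) = Inl (i', \<not> p)"
      "2 * (j div 2) + 1 < length zl"
      using assignment_pebbling_pair[OF pebbling j(1)] by blast
    consider "j = 2 * (j div 2)" | "j = 2 * (j div 2) + 1"
      by (metis even_two_times_div_two odd_two_times_div_two_succ)
    then have "Inl (i, \<not> b) \<in> {zl ! (2 * (j div 2)), zl ! (2 * (j div 2) + 1)}"
    proof cases
      case 1
      then have "p = b" "i' = i" using pair(1) j(2) by (metis Pair_inject sum.inject(1))+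
      then show ?thesis using pair(2) by simp
    next
      case 2
      then have "p = (\<not> b)" "i' = i" using pair(2) j(2) by (metis Pair_inject sum.inject(1))+
      then show ?thesis using pair(1) by simp
    qed
    then have "{Inl (i, b), Inl (i, \<not> b)} \<subseteq> set zl"
      using \<open>Inl (i, b) \<in> set zl\<close> pair(3) by auto
    then show ?thesis using x Inl l by (cases q; cases b) auto
  qed (simp add: Inl l lab_LCN_assign_Inl)
qed (simp add: lab_LCN_assign_Inr)

definition label_of_atp :: "nat \<Rightarrow> 'l list \<times> (bool \<times> 'c option) list list \<Rightarrow> bool option" where
  "label_of_atp m a =
     (if \<exists>j<m. fst (snd a ! j ! m) then Some (even (LEAST j. j < m \<and> fst (snd a ! j ! m))) else None)"

lemma lab_LCN_assign_eq_label_of_atp: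
  assumes pebbling: "assignment_pebbling \<rho> zl"
  shows "lab (LCN_assign F \<rho>) x = label_of_atp (length zl) (atp G (zl @ [x]))"
proof -
  have coincide: "fst (snd (atp G (zl @ [x])) ! j ! length zl) \<longleftrightarrow> zl ! j = x" if "j < length zl" for j
    using that by (simp add: atp_def nth_append)
  show ?thesis
  proof (cases "\<exists>j<length zl. zl ! j = x")
    case True
    define j0 where "j0 = (LEAST j. j < length zl \<and> zl ! j = x)"
    have "j0 < length zl \<and> zl ! j0 = x"
      unfolding j0_def by (rule LeastI_ex) (use True in blast)
    moreover have "(LEAST j. j < length zl \<and> fst (snd (atp G (zl @ [x])) ! j ! length zl)) = j0"
      unfolding j0_def by (rule arg_cong[where f = Least]) (use coincide in auto)
    ultimately show ?thesis
      using True coincide lab_LCN_assign_pebbled[OF pebbling, of j0] by (auto simp: label_of_atp_def)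
  next
    case False
    then show ?thesis
      using coincide lab_LCN_assign_unpebbled[OF pebbling] by (auto simp: label_of_atp_def in_set_conv_nth)
  qed
qed

lemma length_eq_if_atp_eq: "atp G xs = atp H ys \<Longrightarrow> length ys = length xs"
  by (drule arg_cong[where f = "\<lambda>a. length (fst a)"]) (simp add: atp_def)

lemma nth_eq_iff_if_atp_eq:
  assumes "atp G xs = atp H ys" and "a < length xs" and "b < length xs"
  shows "xs ! a = xs ! b \<longleftrightarrow> ys ! a = ys ! b"
    and "edge G (xs ! a) (xs ! b) = edge H (ys ! a) (ys ! b)"
  using arg_cong[OF assms(1), of "\<lambda>a'. snd a' ! a ! b"] length_eq_if_atp_eq[OF assms(1)] assms(2,3)
  by (simp_all add: atp_def)

lemma atp_take: "atp G (take j xs) = (take j (fst (atp G xs)), map (take j) (take j (snd (atp G xs))))"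
  by (simp add: atp_def take_map)

definition even_entries :: "'a list \<Rightarrow> 'a set" where
  "even_entries zl = {zl ! (2 * t) | t. t < length zl div 2}"

definition assignment_of_pebbling :: "(lit + lit set) list \<Rightarrow> nat \<rightharpoonup> bool" where
  "assignment_of_pebbling zl i =
     (if Inl (i, True) \<in> even_entries zl then Some True
      else if Inl (i, False) \<in> even_entries zl then Some False else None)"

context
  fixes \<sigma> :: "nat \<rightharpoonup> bool" and zl zl' :: "(lit + lit set) list" and f g :: cnf
  assumes pebbling: "assignment_pebbling \<sigma> zl" and same_atp: "atp (LCN f) zl = atp (LCN g) zl'"
begin

lemma literal_pairs_transfer:
  assumes t: "t < length zl' div 2"
  shows "\<exists>i p. zl' ! (2 * t) = Inl (i, p) \<and> zl' ! (2 * t + 1) = Inl (i, \<not> p)"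
proof -
  have "2 * t < length zl" using t length_eq_if_atp_eq[OF same_atp] by simp
  then obtain i p
    where pair: "zl ! (2 * t) = Inl (i, p)" "zl ! (2 * t + 1) = Inl (i, \<not> p)" "2 * t + 1 < length zl"
    using assignment_pebbling_pair[OF pebbling, of "2 * t"] by auto
  then have "edge (LCN f) (zl ! (2 * t)) (zl ! (2 * t + 1)) = Some LitLit"
    by (simp add: edge_LCN_LitLit_iff)
  then have "edge (LCN g) (zl' ! (2 * t)) (zl' ! (2 * t + 1)) = Some LitLit"
    using nth_eq_iff_if_atp_eq(2)[OF same_atp, of "2 * t" "2 * t + 1"] pair(3) by simp
  then show ?thesis by (simp add: edge_LCN_LitLit_iff)
qed

lemma even_entries_consistent:
  assumes "Inl (i, p) \<in> even_entries zl'" and "Inl (i, \<not> p) \<in> even_entries zl'"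
  shows False
proof -
  have len: "length zl' = length zl" by (rule length_eq_if_atp_eq[OF same_atp])
  obtain t t' where t: "t < length zl' div 2" "zl' ! (2 * t) = Inl (i, p)"
    and t': "t' < length zl' div 2" "zl' ! (2 * t') = Inl (i, \<not> p)"
    using assms by (auto simp: even_entries_def)
  have "2 * t' < length zl" "2 * t + 1 < length zl" using t t' len by linarith+
  moreover have "zl' ! (2 * t') = zl' ! (2 * t + 1)" using literal_pairs_transfer[OF t(1)] t t' by auto
  ultimately have "zl ! (2 * t') = zl ! (2 * t + 1)" using nth_eq_iff_if_atp_eq(1)[OF same_atp] by blast
  then show False
    using assignment_pebbling_pair[OF pebbling, of "2 * t"]
      assignment_pebbling_pair[OF pebbling, of "2 * t'"]
      \<open>2 * t' < length zl\<close> \<open>2 * t + 1 < length zl\<close> by auto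
qed

lemma assignment_of_pebbling_eq_Some:
  "assignment_of_pebbling zl' i = Some b \<longleftrightarrow> Inl (i, b) \<in> even_entries zl'"
  using even_entries_consistent[of i True] even_entries_consistent[of i False]
  by (cases b) (auto simp: assignment_of_pebbling_def)

lemma assignment_pebbling_transfer: "assignment_pebbling (assignment_of_pebbling zl') zl'"
proof -
  have even: "even (length zl')"
    using pebbling length_eq_if_atp_eq[OF same_atp] by (simp add: assignment_pebbling_def)
  have "even_entries zl' \<subseteq> set zl'"
    using even by (auto simp: even_entries_def)
  moreover have "zl' ! (2 * t) \<in> even_entries zl'" if "t < length zl' div 2" for t
    using that by (auto simp: even_entries_def)
  ultimately show ?thesis
    using even literal_pairs_transfer
    by (fastforce simp: assignment_pebbling_def assignment_of_pebbling_eq_Some)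
qed

lemma dom_assignment_of_pebbling:
  assumes "set zl' \<subseteq> verts (LCN g)"
  shows "dom (assignment_of_pebbling zl') \<subseteq> {..<nvars g}"
proof
  fix i assume "i \<in> dom (assignment_of_pebbling zl')"
  then obtain b where "Inl (i, b) \<in> even_entries zl'"
    by (auto simp: assignment_of_pebbling_eq_Some)
  then have "Inl (i, b) \<in> set zl'"
    by (auto simp: even_entries_def)
  then show "i \<in> {..<nvars g}" using assms by (auto simp: verts_LCN)
qed

end

theorem lemma1:
  fixes k :: nat and f g :: cnf and \<sigma> :: "nat \<rightharpoonup> bool"
  assumes "k \<ge> 4"
    and "wf_cnf f" and "wf_cnf g"
    and "\<not> kwl_distinguishes k (LCN f) (LCN g)"
    and "dom \<sigma> \<subseteq> {..<nvars f}"
    and "card (dom \<sigma>) \<le> k div 2 - 1"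
  shows "\<exists>\<tau> :: nat \<rightharpoonup> bool. dom \<tau> \<subseteq> {..<nvars g} \<and>
           \<not> wl_distinguishes (LCN_assign f \<sigma>) (LCN_assign g \<tau>)"
proof -
  note nd = assms(4)
  interpret kwl_pair "LCN f" "LCN g" k
    using assms(1-3) by unfold_locales (simp_all add: finite_verts_LCN)
  let ?m = "2 * card (dom \<sigma>)"
  have m: "?m + 2 \<le> k" using assms(1,6) by linarith
  show ?thesis
  proof (cases "verts (LCN f) = {}")
    case True
    then have "verts (LCN g) = {}" by (rule kwl_indist_verts_empty[OF nd])
    with True show ?thesis
      by (intro exI[of _ Map.empty]) (simp add: wl_distinguishes_def verts_LCN_assign)
  next
    case False
    obtain xs where xs: "xs \<in> ktuples k (verts (LCN f))" and \<sigma>: "assignment_pebbling \<sigma> (take ?m xs)"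
      using assignment_pebbled_ktuple[OF assms(5) _ False, where k = k] m by auto
    obtain ys where ys: "ys \<in> ktuples k (verts (LCN g))"
      and eq: "same_kwl_col xs ys"
      by (rule same_kwl_col_exists[OF nd xs])
    let ?\<tau> = "assignment_of_pebbling (take ?m ys)"
    have same_atp: "atp (LCN f) (take ?m xs) = atp (LCN g) (take ?m ys)"
      using atp_eq_if_same_kwl_col[OF xs ys eq] by (simp add: atp_take)
    have "length (take ?m xs) = ?m" "length (take ?m ys) = ?m" using xs ys m by (simp_all add: ktuples_def)
    then have "\<not> wl_distinguishes (LCN_assign f \<sigma>) (LCN_assign g ?\<tau>)"
      using lab_LCN_assign_eq_label_of_atp[OF \<sigma>]
        lab_LCN_assign_eq_label_of_atp[OF assignment_pebbling_transfer[OF \<sigma> same_atp]]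
      by (intro not_wl_distinguishes_relabel[OF nd xs ys eq m, where L = "label_of_atp ?m"])
         (simp_all add: verts_LCN_assign edge_LCN_assign)
    moreover have "dom ?\<tau> \<subseteq> {..<nvars g}"
      using ys by (intro dom_assignment_of_pebbling[OF \<sigma> same_atp])
        (auto simp: ktuples_def dest: in_set_takeD)
    ultimately show ?thesis by blast
  qed
qed

end
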